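(* There exists a family of quantum circuits, one for each $n\ge 1$, of depth $O(1)$ (a constant independent of $n$) and size $O(n\log n)$, such that the $n$-th circuit implements exactly the quantum operation $\mathrm{OR}_n$.
   Context: Quantum circuits are built from elementary gates: arbitrary one-qubit gates, CNOT gates, and unbounded fan-out gates. An unbounded fan-out gate on $k+1$ qubits ($k\ge1$) maps $|y\rangle\bigotimes_{j=0}^{k-1}|x_j\rangle \mapsto |y\rangle\bigotimes_{j=0}^{k-1}|x_j\oplus y\rangle$ for $y,x_j\in\{0,1\}$ (for $k=1$ it is a CNOT). Circuits may use ancillary qubits initialized to $|0\rangle$. The size of a circuit is the total over its gates of the number of qubits each gate acts on; the depth is the number of layers, defined by: input qubits have depth 0, a gate has depth 1 plus the maximal depth of gates it depends on, and the circuit depth is the maximal gate depth. For $x=x_0\cdots x_{n-1}\in\{0,1\}^n$, $\mathrm{OR}_n(x)=1$ if $x\ne 0^n$ and $0$ otherwise; the quantum operation $\mathrm{OR}_n$ maps $\bigl(\bigotimes_{j=0}^{n-1}|x_j\rangle\bigr)|z\rangle\mapsto\bigl(\bigotimes_{j=0}^{n-1}|x_j\rangle\bigr)|z\oplus \mathrm{OR}_n(x)\rangle$ for $x_j,z\in\{0,1\}$. Logarithms are base 2. *)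

theory Defs
  imports Complex_Main "HOL-Library.Landau_Symbols"
begin

text \<open>Qubits are numbered 0,1,2,...; a computational basis string on m qubits is a
  bool list of length m (entry j is the value of qubit j). A (not necessarily normalised)
  state is a function from basis strings to complex amplitudes; only strings of the
  right length matter.\<close>

type_synonym qstate = "bool list \<Rightarrow> complex"

datatype gate =
    OneQ nat "bool \<Rightarrow> bool \<Rightarrow> complex"   (* arbitrary one-qubit gate: qubit, 2x2 matrix U (row, column) *)
  | CNOT nat nat                          (* control, target *)
  | Fanout nat "nat list"                 (* control y, targets x_0..x_{k-1} *)

definition unitary2 :: "(bool \<Rightarrow> bool \<Rightarrow> complex) \<Rightarrow> bool" where
  "unitary2 U \<longleftrightarrow> (\<forall>i j. (\<Sum>k\<in>UNIV. cnj (U k i) * U k j) = (if i = j then 1 else 0))"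

fun gate_qubits :: "gate \<Rightarrow> nat set" where
  "gate_qubits (OneQ q U) = {q}"
| "gate_qubits (CNOT c t) = {c, t}"
| "gate_qubits (Fanout c ts) = insert c (set ts)"

fun wf_gate :: "nat \<Rightarrow> gate \<Rightarrow> bool" where
  "wf_gate m (OneQ q U) \<longleftrightarrow> q < m \<and> unitary2 U"
| "wf_gate m (CNOT c t) \<longleftrightarrow> c < m \<and> t < m \<and> c \<noteq> t"
| "wf_gate m (Fanout c ts) \<longleftrightarrow> c < m \<and> (\<forall>t\<in>set ts. t < m) \<and> ts \<noteq> [] \<and> distinct ts \<and> c \<notin> set ts"

definition wf_circuit :: "nat \<Rightarrow> gate list \<Rightarrow> bool" where
  "wf_circuit m C \<longleftrightarrow> (\<forall>g\<in>set C. wf_gate m g)"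

text \<open>Fan-out: the basis state |y>|x_j> goes to |y>|x_j xor y>, i.e. a permutation of basis states
  (an involution), so the new amplitude of ys is the old amplitude of the flipped string.\<close>

definition fanout_flip :: "nat \<Rightarrow> nat list \<Rightarrow> bool list \<Rightarrow> bool list" where
  "fanout_flip c ts ys = foldl (\<lambda>zs t. zs[t := (zs ! t \<noteq> ys ! c)]) ys ts"

fun apply_gate :: "gate \<Rightarrow> qstate \<Rightarrow> qstate" where
  "apply_gate (OneQ q U) \<psi> = (\<lambda>ys. \<Sum>b\<in>UNIV. U (ys ! q) b * \<psi> (ys[q := b]))"
| "apply_gate (CNOT c t) \<psi> = (\<lambda>ys. \<psi> (fanout_flip c [t] ys))"
| "apply_gate (Fanout c ts) \<psi> = (\<lambda>ys. \<psi> (fanout_flip c ts ys))"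

fun run_circuit :: "gate list \<Rightarrow> qstate \<Rightarrow> qstate" where
  "run_circuit [] \<psi> = \<psi>"
| "run_circuit (g # gs) \<psi> = run_circuit gs (apply_gate g \<psi>)"

definition circuit_size :: "gate list \<Rightarrow> nat" where
  "circuit_size C = (\<Sum>g\<leftarrow>C. card (gate_qubits g))"

text \<open>Depth: input qubits have depth 0; a gate has depth 1 + the maximal depth of the gates it
  depends on (earlier gates sharing a qubit with it); the circuit depth is the maximal gate depth.
  We track, for each qubit, the depth of the last gate acting on it (0 if none).\<close>
fun gate_depths :: "(nat \<Rightarrow> nat) \<Rightarrow> gate list \<Rightarrow> nat list" where
  "gate_depths d [] = []"
| "gate_depths d (g # gs) =
     (let v = Suc (Max (d ` gate_qubits g))
      in v # gate_depths (\<lambda>q. if q \<in> gate_qubits g then v else d q) gs)"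

definition circuit_depth :: "gate list \<Rightarrow> nat" where
  "circuit_depth C = Max (insert 0 (set (gate_depths (\<lambda>_. 0) C)))"

text \<open>OR_n on n+1 qubits: input qubits 0..n-1, output qubit n.\<close>
definition OR_bits :: "bool list \<Rightarrow> bool" where
  "OR_bits xs \<longleftrightarrow> (\<exists>x\<in>set xs. x)"

definition OR_op :: "nat \<Rightarrow> qstate \<Rightarrow> qstate" where
  "OR_op n \<psi> = (\<lambda>ys. \<psi> (take n ys @ [ys ! n \<noteq> OR_bits (take n ys)] @ drop (Suc n) ys))"

text \<open>Tensor a state of n+1 qubits with a ancillas in |0>: qubits n+1..n+a are ancillas.\<close>
definition with_ancillas :: "nat \<Rightarrow> nat \<Rightarrow> qstate \<Rightarrow> qstate" where
  "with_ancillas k a \<psi> =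
     (\<lambda>ys. if length ys = k + a \<and> drop k ys = replicate a False then \<psi> (take k ys) else 0)"

definition implements_OR :: "nat \<Rightarrow> nat \<Rightarrow> gate list \<Rightarrow> bool" where
  "implements_OR n a C \<longleftrightarrow>
     (\<forall>\<psi>. run_circuit C (with_ancillas (Suc n) a \<psi>) = with_ancillas (Suc n) a (OR_op n \<psi>))"

end

theory Submission
  imports Defs
begin

text \<open>Fan-out lets a target qubit be copied into many scratch qubits, so that a phase
  \<open>\<Sum>\<^sub>j s\<^sub>j \<theta>\<^sub>i\<^sub>j\<close> controlled by many source bits can be applied in constant depth, one
  controlled phase per copy pair; conjugating by Hadamards turns it into a rotation of the target
  (phase kickback). Three such gadgets compute OR exactly. First, count qubit \<open>k < m = \<lceil>log (n+1)\<rceil>\<close>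
  is kicked by \<open>\<pi> w / 2\<^sup>k\<close>, where \<open>w\<close> is the Hamming weight of the input: for \<open>w = 0\<close> the count
  register stays \<open>0\<close>, and for \<open>0 < w < 2\<^sup>m\<close>, writing \<open>w = 2\<^sup>v d\<close> with \<open>d\<close> odd, qubit \<open>v\<close> is
  flipped with certainty, so the register is nonzero exactly when \<open>OR(x) = 1\<close>. Second, for every
  \<open>0 < t < 2\<^sup>m\<close> the parity of \<open>t \<cdot> s\<close> is written to a fresh qubit; exactly \<open>2\<^sup>m\<^sup>-\<^sup>1\<close> of these
  parities are odd if \<open>s \<noteq> 0\<close> and none if \<open>s = 0\<close>. Third, the output is kicked by \<open>\<pi> / 2\<^sup>m\<^sup>-\<^sup>1\<close>
  per odd parity, i.e. flipped iff \<open>s \<noteq> 0\<close>. Undoing the first two stages cleans all ancillas.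
  Each gadget has constant depth and size \<open>O(p q)\<close>, giving size \<open>O(n m + 2\<^sup>m m) = O(n log n)\<close>.\<close>

section \<open>Basis-state bookkeeping\<close>

lemma run_circuit_append: "run_circuit (A @ B) \<psi> = run_circuit B (run_circuit A \<psi>)"
  by (induction A arbitrary: \<psi>) auto

lemma length_foldl_update: "length (foldl (\<lambda>zs t. zs[t := f (zs ! t)]) zs0 ts) = length zs0"
  by (induction ts arbitrary: zs0) auto

lemma nth_foldl_update:
  "distinct ts \<Longrightarrow> k < length zs0 \<Longrightarrow>
   foldl (\<lambda>zs t. zs[t := f (zs ! t)]) zs0 ts ! k = (if k \<in> set ts then f (zs0 ! k) else zs0 ! k)"
proof (induction ts arbitrary: zs0)
  case (Cons t ts)
  show ?case using Cons.prems Cons.IH[of "zs0[t := f (zs0 ! t)]"]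
    by (cases "k = t") (auto simp: nth_list_update)
qed simp

lemma length_fanout_flip [simp]: "length (fanout_flip c ts ys) = length ys"
  unfolding fanout_flip_def by (rule length_foldl_update)

lemma nth_fanout_flip: "distinct ts \<Longrightarrow> k < length ys \<Longrightarrow>
   fanout_flip c ts ys ! k = (if k \<in> set ts then ys ! k \<noteq> ys ! c else ys ! k)"
  unfolding fanout_flip_def by (rule nth_foldl_update)

definition bitstrings :: "nat \<Rightarrow> bool list set" where
  "bitstrings p = {c. length c = p}"

lemma finite_bitstrings [simp]: "finite (bitstrings p)"
  using finite_lists_length_eq[of "UNIV :: bool set" p] by (simp add: bitstrings_def)

lemma bitstrings_Suc: "bitstrings (Suc p) = (\<lambda>(c, b). c @ [b]) ` (bitstrings p \<times> UNIV)"
proof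
  show "bitstrings (Suc p) \<subseteq> (\<lambda>(c, b). c @ [b]) ` (bitstrings p \<times> UNIV)"
  proof
    fix xs assume "xs \<in> bitstrings (Suc p)"
    hence l: "length xs = Suc p" by (simp add: bitstrings_def)
    hence "xs = butlast xs @ [last xs]" by (metis append_butlast_last_id list.size(3) nat.simps(3))
    moreover have "butlast xs \<in> bitstrings p" using l by (simp add: bitstrings_def)
    ultimately show "xs \<in> (\<lambda>(c, b). c @ [b]) ` (bitstrings p \<times> UNIV)" by force
  qed
qed (auto simp: bitstrings_def)

lemma sum_bitstrings_Suc:
  "sum f (bitstrings (Suc p)) = (\<Sum>c\<in>bitstrings p. \<Sum>b\<in>UNIV. f (c @ [b]))"
proof -
  have "inj_on (\<lambda>(c, b). c @ [b]) (bitstrings p \<times> (UNIV :: bool set))"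
    by (auto simp: inj_on_def)
  then have "sum f (bitstrings (Suc p)) = sum (f \<circ> (\<lambda>(c, b). c @ [b])) (bitstrings p \<times> UNIV)"
    unfolding bitstrings_Suc by (rule sum.reindex)
  then show ?thesis by (simp add: sum.cartesian_product comp_def case_prod_unfold)
qed

lemma sum_bitstrings_1: "sum f (bitstrings (Suc 0)) = f [False] + f [True]"
proof -
  have "bitstrings 0 = {[]}" by (auto simp: bitstrings_def)
  then show ?thesis by (simp add: sum_bitstrings_Suc UNIV_bool)
qed

lemma prod_snoc_bit:
  "length c = p \<Longrightarrow> (\<Prod>i<Suc p. f i ((c @ [b]) ! i)) = (\<Prod>i<p. f i (c ! i)) * f p b"
  by (auto simp: nth_append intro!: prod.cong)

lemma sum_bitstrings_prod:
  fixes f :: "nat \<Rightarrow> bool \<Rightarrow> 'a::comm_semiring_1"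
  shows "(\<Sum>c\<in>bitstrings p. \<Prod>i<p. f i (c ! i)) = (\<Prod>i<p. f i False + f i True)"
proof (induction p)
  case (Suc p)
  have "(\<Sum>c\<in>bitstrings (Suc p). \<Prod>i<Suc p. f i (c ! i))
      = (\<Sum>c\<in>bitstrings p. \<Sum>b\<in>UNIV. (\<Prod>i<p. f i (c ! i)) * f p b)"
    unfolding sum_bitstrings_Suc
    by (intro sum.cong refl) (simp add: prod_snoc_bit bitstrings_def del: lessThan_Suc prod.lessThan_Suc)
  also have "\<dots> = (\<Sum>c\<in>bitstrings p. \<Prod>i<p. f i (c ! i)) * (f p False + f p True)"
    by (simp add: UNIV_bool sum_distrib_left sum_distrib_right sum.distrib algebra_simps)
  finally show ?case using Suc by simp
qed (simp add: bitstrings_def)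

lemma sum_bitstrings_single:
  fixes f :: "bool list \<Rightarrow> 'a::comm_monoid_add"
  assumes "v \<in> bitstrings p" and "\<And>c. c \<in> bitstrings p \<Longrightarrow> \<exists>i<p. c ! i \<noteq> v ! i \<Longrightarrow> f c = 0"
  shows "sum f (bitstrings p) = f v"
proof -
  have "f c = 0" if "c \<in> bitstrings p - {v}" for c
  proof -
    have "\<exists>i<p. c ! i \<noteq> v ! i"
      using that assms(1) nth_equalityI[of c v] by (auto simp: bitstrings_def)
    then show ?thesis using that assms(2) by blast
  qed
  then have "sum f (bitstrings p) = sum f {v}"
    using assms(1) by (intro sum.mono_neutral_right) auto
  then show ?thesis by simp
qed

lemma prod_indicator:
  "(\<Prod>i<(p::nat). if Q i then (1::'a::comm_semiring_1) else 0) = (if \<forall>i<p. Q i then 1 else 0)"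
proof (cases "\<forall>i<p. Q i")
  case False
  then obtain i where "i < p" "\<not> Q i" by blast
  then show ?thesis using False by (intro trans[OF prod_zero]) auto
qed simp

fun put_bits :: "bool list \<Rightarrow> (nat \<Rightarrow> nat) \<Rightarrow> nat \<Rightarrow> bool list \<Rightarrow> bool list" where
  "put_bits ys g 0 c = ys"
| "put_bits ys g (Suc p) c = put_bits (ys[g p := c ! p]) g p c"

lemma length_put_bits [simp]: "length (put_bits ys g p c) = length ys"
  by (induction p arbitrary: ys) auto

lemma put_bits_other: "k \<notin> g ` {..<p} \<Longrightarrow> put_bits ys g p c ! k = ys ! k"
proof (induction p arbitrary: ys)
  case (Suc p)
  then have "k \<notin> g ` {..<p}" and "g p \<noteq> k" by auto
  then show ?case using Suc.IH by simp
qed simp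

lemma put_bits_above: "\<forall>i<p. g i < b \<Longrightarrow> b \<le> k \<Longrightarrow> put_bits ys g p c ! k = ys ! k"
  by (rule put_bits_other) force

lemma put_bits_below: "\<forall>i<p. b \<le> g i \<Longrightarrow> k < b \<Longrightarrow> put_bits ys g p c ! k = ys ! k"
  by (rule put_bits_other) force

lemma put_bits_at:
  "inj_on g {..<p} \<Longrightarrow> i < p \<Longrightarrow> g i < length ys \<Longrightarrow> put_bits ys g p c ! g i = c ! i"
proof (induction p arbitrary: ys)
  case (Suc p)
  show ?case
  proof (cases "i = p")
    case True
    have "g p \<notin> g ` {..<p}"
      using Suc.prems(1) unfolding inj_on_def by (metis imageE lessThan_iff less_Suc_eq less_irrefl)
    then show ?thesis using True Suc.prems by (simp add: put_bits_other)
  next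
    case False
    have "inj_on g {..<p}" using Suc.prems(1) by (rule inj_on_subset) auto
    then show ?thesis using False Suc by simp
  qed
qed simp

lemma put_bits_cong: "(\<And>i. i < p \<Longrightarrow> c ! i = c' ! i) \<Longrightarrow> put_bits ys g p c = put_bits ys g p c'"
  by (induction p arbitrary: ys) auto

lemma put_bits_snoc:
  "length c = p \<Longrightarrow> put_bits ys g (Suc p) (c @ [b]) = put_bits (ys[g p := b]) g p c"
  by (auto simp: nth_append intro: put_bits_cong)

lemma take_put_bits: "\<forall>i<p. b \<le> g i \<Longrightarrow> take b (put_bits ys g p c) = take b ys"
  by (intro nth_equalityI) (auto simp: put_bits_below)

lemma put_bits_put_bits:
  assumes "inj_on g {..<p}" and "\<forall>i<p. g i < length ys"
  shows "put_bits (put_bits ys g p b) g p c = put_bits ys g p c"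
proof (rule nth_equalityI)
  fix k assume "k < length (put_bits (put_bits ys g p b) g p c)"
  then show "put_bits (put_bits ys g p b) g p c ! k = put_bits ys g p c ! k"
    using assms by (cases "k \<in> g ` {..<p}") (auto simp: put_bits_at put_bits_other)
qed simp

section \<open>Elementary gadgets\<close>

definition one_qubit_layer :: "(nat \<Rightarrow> bool \<Rightarrow> bool \<Rightarrow> complex) \<Rightarrow> (nat \<Rightarrow> nat) \<Rightarrow> nat \<Rightarrow> gate list"
  where "one_qubit_layer U tg p = map (\<lambda>i. OneQ (tg i) (U i)) [0..<p]"

lemma run_one_qubit_layer:
  assumes "inj_on tg {..<p}" and "\<forall>i<p. tg i < length ys"
  shows "run_circuit (one_qubit_layer U tg p) \<psi> ys =
    (\<Sum>c\<in>bitstrings p. (\<Prod>i<p. U i (ys ! tg i) (c ! i)) * \<psi> (put_bits ys tg p c))"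
  using assms
proof (induction p arbitrary: ys)
  case (Suc p)
  let ?run = "run_circuit (one_qubit_layer U tg p) \<psi>"
  have inj: "inj_on tg {..<p}" using Suc.prems(1) by (rule inj_on_subset) auto
  have unchanged: "ys[tg p := b] ! tg i = ys ! tg i" if "i < p" for i b
    using Suc.prems(1) that unfolding inj_on_def
    by (metis lessThan_iff less_Suc_eq less_irrefl nth_list_update_neq)
  have "run_circuit (one_qubit_layer U tg (Suc p)) \<psi> ys
      = (\<Sum>b\<in>UNIV. U p (ys ! tg p) b * ?run (ys[tg p := b]))"
    by (simp add: one_qubit_layer_def run_circuit_append)
  also have "\<dots> = (\<Sum>b\<in>UNIV. \<Sum>c\<in>bitstrings p.
      U p (ys ! tg p) b * ((\<Prod>i<p. U i (ys ! tg i) (c ! i)) * \<psi> (put_bits (ys[tg p := b]) tg p c)))"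
    using Suc.IH[OF inj] Suc.prems(2) unchanged by (simp add: sum_distrib_left)
  also have "\<dots> = (\<Sum>c\<in>bitstrings p. \<Sum>b\<in>UNIV.
      U p (ys ! tg p) b * ((\<Prod>i<p. U i (ys ! tg i) (c ! i)) * \<psi> (put_bits (ys[tg p := b]) tg p c)))"
    by (rule sum.swap)
  also have "\<dots> = (\<Sum>c\<in>bitstrings p. \<Sum>b\<in>UNIV.
      (\<Prod>i<Suc p. U i (ys ! tg i) ((c @ [b]) ! i)) * \<psi> (put_bits ys tg (Suc p) (c @ [b])))"
    by (intro sum.cong refl) (simp add: bitstrings_def prod_snoc_bit[where f="\<lambda>i. U i (ys ! tg i)"] put_bits_snoc
        del: lessThan_Suc prod.lessThan_Suc put_bits.simps)
  also have "\<dots> = (\<Sum>c\<in>bitstrings (Suc p). (\<Prod>i<Suc p. U i (ys ! tg i) (c ! i)) * \<psi> (put_bits ys tg (Suc p) c))"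
    by (rule sum_bitstrings_Suc[symmetric])
  finally show ?case .
qed (simp add: one_qubit_layer_def bitstrings_def)

definition phase_gate :: "real \<Rightarrow> bool \<Rightarrow> bool \<Rightarrow> complex" where
  "phase_gate \<theta> i j = (if i = j then (if i then cis \<theta> else 1) else 0)"

lemma apply_phase_gate:
  "apply_gate (OneQ q (phase_gate \<theta>)) \<psi> = (\<lambda>ys. (if ys ! q then cis \<theta> else 1) * \<psi> ys)"
proof
  fix ys :: "bool list"
  have "ys[q := ys ! q] = ys" by simp
  then show "apply_gate (OneQ q (phase_gate \<theta>)) \<psi> ys = (if ys ! q then cis \<theta> else 1) * \<psi> ys"
    by (cases "q < length ys"; cases "ys ! q") (auto simp: UNIV_bool phase_gate_def list_update_beyond)
qed

lemma apply_CNOT: "apply_gate (CNOT a b) \<psi> = (\<lambda>ys. \<psi> (ys[b := (ys ! b \<noteq> ys ! a)]))"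
  by (simp add: fanout_flip_def)

definition cphase_gates :: "real \<Rightarrow> nat \<Rightarrow> nat \<Rightarrow> gate list" where
  "cphase_gates \<theta> a b =
     [OneQ a (phase_gate (\<theta>/2)), OneQ b (phase_gate (\<theta>/2)), CNOT a b, OneQ b (phase_gate (-\<theta>/2)), CNOT a b]"

lemma run_cphase_gates:
  assumes "a \<noteq> b" "a < length ys" "b < length ys"
  shows "run_circuit (cphase_gates \<theta> a b) \<psi> ys = (if ys ! a \<and> ys ! b then cis \<theta> else 1) * \<psi> ys"
proof -
  let ?ys' = "ys[b := (ys ! b \<noteq> ys ! a)]"
  have "?ys' ! a = ys ! a" and "?ys'[b := (?ys' ! b \<noteq> ys ! a)] = ys"
    using assms by (auto simp: list_update_same_conv)
  then have "run_circuit (cphase_gates \<theta> a b) \<psi> ys =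
     (if ?ys' ! b then cis (-\<theta>/2) else 1) *
     ((if ys ! b then cis (\<theta>/2) else 1) * ((if ys ! a then cis (\<theta>/2) else 1) * \<psi> ys))"
    unfolding cphase_gates_def run_circuit.simps apply_phase_gate apply_CNOT by simp
  moreover have "cis (\<theta>/2) * cis (\<theta>/2) = cis \<theta>" "cis (-\<theta>/2) * cis (\<theta>/2) = 1"
    by (simp_all add: cis_mult)
  ultimately show ?thesis using assms
    by (cases "ys ! a"; cases "ys ! b") (auto simp: algebra_simps)
qed

lemma run_concat_diagonal:
  assumes "\<And>i \<psi>. i \<in> set is \<Longrightarrow> run_circuit (F i) \<psi> ys = D i * \<psi> ys"
  shows "run_circuit (concat (map F is)) \<psi> ys = (\<Prod>i\<leftarrow>is. D i) * \<psi> ys"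
  using assms by (induction "is" arbitrary: \<psi>) (simp_all add: run_circuit_append)

fun fanouts_flip :: "(nat \<Rightarrow> nat) \<Rightarrow> (nat \<Rightarrow> nat list) \<Rightarrow> nat list \<Rightarrow> bool list \<Rightarrow> bool list" where
  "fanouts_flip cc tt [] ys = ys"
| "fanouts_flip cc tt (l # ls) ys = fanout_flip (cc l) (tt l) (fanouts_flip cc tt ls ys)"

lemma length_fanouts_flip [simp]: "length (fanouts_flip cc tt ls ys) = length ys"
  by (induction ls) auto

lemma run_fanouts:
  "run_circuit (map (\<lambda>l. Fanout (cc l) (tt l)) ls) \<psi> = (\<lambda>ys. \<psi> (fanouts_flip cc tt ls ys))"
  by (induction ls arbitrary: \<psi>) auto

text \<open>\<open>own\<close> names the unique fan-out targeting a qubit, so the target sets are disjoint and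
  the fan-outs commute.\<close>

lemma nth_fanouts_flip:
  assumes "distinct ls" "\<forall>l\<in>set ls. distinct (tt l)"
    "\<forall>l\<in>set ls. \<forall>l'\<in>set ls. cc l \<notin> set (tt l')"
    "\<forall>l\<in>set ls. \<forall>k\<in>set (tt l). own k = l"
    "\<forall>l\<in>set ls. cc l < length ys"
    "k < length ys"
  shows "fanouts_flip cc tt ls ys ! k =
    (if \<exists>l\<in>set ls. k \<in> set (tt l) then ys ! k \<noteq> ys ! cc (own k) else ys ! k)"
  using assms
proof (induction ls arbitrary: k)
  case (Cons l ls)
  let ?Y = "fanouts_flip cc tt ls ys"
  have IH: "?Y ! k = (if \<exists>l\<in>set ls. k \<in> set (tt l) then ys ! k \<noteq> ys ! cc (own k) else ys ! k)"
    if "k < length ys" for k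
    using Cons.IH[of k] Cons.prems that by auto
  have control: "?Y ! cc l = ys ! cc l" using IH[of "cc l"] Cons.prems by auto
  show ?case
  proof (cases "k \<in> set (tt l)")
    case True
    then have "own k = l" and "\<not> (\<exists>l'\<in>set ls. k \<in> set (tt l'))"
      using Cons.prems(1,4) by fastforce+
    then show ?thesis using True IH control Cons.prems(2,6) by (simp add: nth_fanout_flip)
  next
    case False
    then show ?thesis using IH Cons.prems(2,6) by (simp add: nth_fanout_flip)
  qed
qed simp

section \<open>Phase kickback through fan-out copies\<close>

definition hadamard :: "bool \<Rightarrow> bool \<Rightarrow> complex" where
  "hadamard i j = (if i \<and> j then -1 else 1) / complex_of_real (sqrt 2)"

text \<open>The gadget acts on \<open>p\<close> target qubits \<open>tg i\<close> and \<open>q\<close> source qubits \<open>sr j\<close>, using the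
  \<open>2 p q\<close> clean scratch qubits from \<open>off\<close> on: \<open>target_copy off q i j\<close> holds a copy of target \<open>i\<close>
  and \<open>source_copy off p q i j\<close> a copy of source \<open>j\<close>. Fan-out \<open>l < p\<close> copies target \<open>l\<close>,
  fan-out \<open>p + j\<close> copies source \<open>j\<close>; \<open>copy_owner\<close> recovers the fan-out from a scratch qubit.\<close>

definition target_copy :: "nat \<Rightarrow> nat \<Rightarrow> nat \<Rightarrow> nat \<Rightarrow> nat" where
  "target_copy off q i j = off + i * q + j"

definition source_copy :: "nat \<Rightarrow> nat \<Rightarrow> nat \<Rightarrow> nat \<Rightarrow> nat \<Rightarrow> nat" where
  "source_copy off p q i j = off + p * q + i * q + j"

definition fanout_control :: "(nat \<Rightarrow> nat) \<Rightarrow> (nat \<Rightarrow> nat) \<Rightarrow> nat \<Rightarrow> nat \<Rightarrow> nat" where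
  "fanout_control tg sr p l = (if l < p then tg l else sr (l - p))"

definition fanout_targets :: "nat \<Rightarrow> nat \<Rightarrow> nat \<Rightarrow> nat \<Rightarrow> nat list" where
  "fanout_targets off p q l =
     (if l < p then map (target_copy off q l) [0..<q] else map (\<lambda>i. source_copy off p q i (l - p)) [0..<p])"

definition copy_owner :: "nat \<Rightarrow> nat \<Rightarrow> nat \<Rightarrow> nat \<Rightarrow> nat" where
  "copy_owner off p q k = (if k < off + p * q then (k - off) div q else p + (k - off - p * q) mod q)"

definition fanout_layer :: "(nat \<Rightarrow> nat) \<Rightarrow> (nat \<Rightarrow> nat) \<Rightarrow> nat \<Rightarrow> nat \<Rightarrow> nat \<Rightarrow> gate list" where
  "fanout_layer tg sr off p q =
     map (\<lambda>l. Fanout (fanout_control tg sr p l) (fanout_targets off p q l)) [0..<p + q]"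

definition cphase_layer :: "(nat \<Rightarrow> nat \<Rightarrow> real) \<Rightarrow> nat \<Rightarrow> nat \<Rightarrow> nat \<Rightarrow> gate list" where
  "cphase_layer \<theta> off p q = concat (map (\<lambda>(i, j).
     cphase_gates (\<theta> i j) (target_copy off q i j) (source_copy off p q i j)) (List.product [0..<p] [0..<q]))"

definition kickback :: "(nat \<Rightarrow> nat) \<Rightarrow> (nat \<Rightarrow> nat) \<Rightarrow> (nat \<Rightarrow> nat \<Rightarrow> real) \<Rightarrow> nat \<Rightarrow> nat \<Rightarrow> nat \<Rightarrow> gate list"
  where "kickback tg sr \<theta> off p q =
     one_qubit_layer (\<lambda>_. hadamard) tg p @ fanout_layer tg sr off p q @ cphase_layer \<theta> off p q
     @ fanout_layer tg sr off p q @ one_qubit_layer (\<lambda>_. hadamard) tg p"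

definition kickback_layout :: "(nat \<Rightarrow> nat) \<Rightarrow> (nat \<Rightarrow> nat) \<Rightarrow> nat \<Rightarrow> nat \<Rightarrow> nat \<Rightarrow> nat \<Rightarrow> bool" where
  "kickback_layout tg sr off p q N \<longleftrightarrow>
     inj_on tg {..<p} \<and> inj_on sr {..<q} \<and> (\<forall>i<p. \<forall>j<q. tg i \<noteq> sr j)
     \<and> (\<forall>i<p. tg i < off) \<and> (\<forall>j<q. sr j < off) \<and> off + 2 * p * q \<le> N"

lemma mult_add_less_mult: "i < p \<Longrightarrow> j < q \<Longrightarrow> i * q + j < p * (q::nat)"
proof -
  assume "i < p" "j < q"
  then have "i * q + j < Suc i * q" by simp
  also have "\<dots> \<le> p * q" using \<open>i < p\<close> by (intro mult_right_mono) auto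
  finally show ?thesis .
qed

lemma target_copy_less: "i < p \<Longrightarrow> j < q \<Longrightarrow> target_copy off q i j < off + p * q"
  using mult_add_less_mult[of i p j q] by (simp add: target_copy_def)

lemma source_copy_less: "i < p \<Longrightarrow> j < q \<Longrightarrow> source_copy off p q i j < off + 2 * p * q"
  using mult_add_less_mult[of i p j q] by (simp add: source_copy_def)

lemma copy_owner_target_copy: "i < p \<Longrightarrow> j < q \<Longrightarrow> copy_owner off p q (target_copy off q i j) = i"
  using target_copy_less[of i p j q off] by (simp add: copy_owner_def target_copy_def add.assoc)

lemma copy_owner_source_copy: "i < p \<Longrightarrow> j < q \<Longrightarrow> copy_owner off p q (source_copy off p q i j) = p + j"
  by (simp add: copy_owner_def source_copy_def add.assoc)

lemma mem_fanout_targets: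
  assumes "l < p + q" "k \<in> set (fanout_targets off p q l)"
  shows "off \<le> k \<and> k < off + 2 * p * q \<and> copy_owner off p q k = l"
proof (cases "l < p")
  case True
  with assms obtain j where j: "j < q" "k = target_copy off q l j" by (auto simp: fanout_targets_def)
  then have "copy_owner off p q k = l" using True by (simp add: copy_owner_target_copy)
  then show ?thesis using j True target_copy_less[of l p j q off] by (simp add: target_copy_def)
next
  case False
  with assms obtain i where i: "i < p" "k = source_copy off p q i (l - p)" by (auto simp: fanout_targets_def)
  moreover have "l - p < q" using False assms(1) by simp
  ultimately have "copy_owner off p q k = l" using False by (simp add: copy_owner_source_copy)
  then show ?thesis using i \<open>l - p < q\<close> source_copy_less[of i p "l - p" q off] by (simp add: source_copy_def)
qed

lemma fanout_targets_cover:
  assumes "off \<le> k" "k < off + 2 * p * q"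
  shows "\<exists>l<p + q. k \<in> set (fanout_targets off p q l)"
proof -
  have q: "q > 0" using assms by (cases q) auto
  show ?thesis
  proof (cases "k < off + p * q")
    case True
    define l where "l = (k - off) div q"
    have "l < p" using True assms unfolding l_def by (simp add: less_mult_imp_div_less)
    moreover have "k = target_copy off q l ((k - off) mod q)"
      using assms unfolding l_def target_copy_def by simp
    ultimately show ?thesis using q by (intro exI[of _ l]) (auto simp: fanout_targets_def)
  next
    case False
    define i where "i = (k - off - p * q) div q"
    have "i < p" using False assms unfolding i_def by (simp add: less_mult_imp_div_less)
    moreover have "k = source_copy off p q i ((k - off - p * q) mod q)"
      using assms False unfolding i_def source_copy_def by simp
    ultimately show ?thesis using q by (intro exI[of _ "p + (k - off - p * q) mod q"]) (auto simp: fanout_targets_def)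
  qed
qed

lemma mem_fanout_targets_iff:
  "(\<exists>l\<in>set [0..<p + q]. k \<in> set (fanout_targets off p q l)) \<longleftrightarrow> off \<le> k \<and> k < off + 2 * p * q"
  using mem_fanout_targets fanout_targets_cover by fastforce

lemma distinct_fanout_targets: "l < p + q \<Longrightarrow> distinct (fanout_targets off p q l)"
proof (cases "l < p")
  case False
  assume "l < p + q"
  then have "q > 0" using False by simp
  then have "inj_on (\<lambda>i. source_copy off p q i (l - p)) {0..<p}"
    by (intro inj_onI) (simp add: source_copy_def)
  with False show ?thesis by (simp add: fanout_targets_def distinct_map)
qed (simp add: fanout_targets_def distinct_map inj_on_def target_copy_def)

lemma fanout_control_less: "kickback_layout tg sr off p q N \<Longrightarrow> l < p + q \<Longrightarrow> fanout_control tg sr p l < off"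
  by (auto simp: fanout_control_def kickback_layout_def)

definition copy_flip :: "(nat \<Rightarrow> nat) \<Rightarrow> (nat \<Rightarrow> nat) \<Rightarrow> nat \<Rightarrow> nat \<Rightarrow> nat \<Rightarrow> bool list \<Rightarrow> bool list" where
  "copy_flip tg sr off p q = fanouts_flip (fanout_control tg sr p) (fanout_targets off p q) [0..<p + q]"

lemma length_copy_flip [simp]: "length (copy_flip tg sr off p q ys) = length ys"
  by (simp add: copy_flip_def)

lemma run_fanout_layer: "run_circuit (fanout_layer tg sr off p q) \<psi> = (\<lambda>ys. \<psi> (copy_flip tg sr off p q ys))"
  unfolding fanout_layer_def copy_flip_def by (rule run_fanouts)

lemma nth_copy_flip:
  assumes ok: "kickback_layout tg sr off p q N" and "length ys = N" "k < N"
  shows "copy_flip tg sr off p q ys ! k =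
    (if off \<le> k \<and> k < off + 2 * p * q then ys ! k \<noteq> ys ! fanout_control tg sr p (copy_owner off p q k)
     else ys ! k)"
proof -
  have control: "\<forall>l\<in>set [0..<p + q]. fanout_control tg sr p l < off"
    using fanout_control_less[OF ok] by simp
  then have "\<forall>l\<in>set [0..<p + q]. \<forall>l'\<in>set [0..<p + q]. fanout_control tg sr p l \<notin> set (fanout_targets off p q l')"
    using mem_fanout_targets by fastforce
  moreover have "off \<le> N" using ok by (simp add: kickback_layout_def)
  ultimately show ?thesis
    unfolding copy_flip_def mem_fanout_targets_iff[symmetric] using assms control
    by (intro nth_fanouts_flip) (auto simp: distinct_fanout_targets dest: mem_fanout_targets)
qed

lemma copy_flip_copy_flip:
  assumes ok: "kickback_layout tg sr off p q N" and len: "length ys = N"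
  shows "copy_flip tg sr off p q (copy_flip tg sr off p q ys) = ys"
proof (rule nth_equalityI)
  fix k assume "k < length (copy_flip tg sr off p q (copy_flip tg sr off p q ys))"
  then have k: "k < N" using len by simp
  show "copy_flip tg sr off p q (copy_flip tg sr off p q ys) ! k = ys ! k"
  proof (cases "off \<le> k \<and> k < off + 2 * p * q")
    case True
    let ?c = "fanout_control tg sr p (copy_owner off p q k)"
    have "?c < off"
      using True fanout_control_less[OF ok] fanout_targets_cover[of off k p q] mem_fanout_targets by blast
    moreover then have "?c < N" using ok by (simp add: kickback_layout_def)
    ultimately have "copy_flip tg sr off p q ys ! ?c = ys ! ?c" using nth_copy_flip[OF ok len] by simp
    then show ?thesis using nth_copy_flip[OF ok _ k] nth_copy_flip[OF ok len k] True len by auto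
  next
    case False
    then show ?thesis using nth_copy_flip[OF ok _ k] nth_copy_flip[OF ok len k] len by auto
  qed
qed simp

definition cphase_factor :: "(nat \<Rightarrow> nat \<Rightarrow> real) \<Rightarrow> nat \<Rightarrow> nat \<Rightarrow> nat \<Rightarrow> bool list \<Rightarrow> complex" where
  "cphase_factor \<theta> off p q Y = (\<Prod>i<p. \<Prod>j<q.
     if Y ! target_copy off q i j \<and> Y ! source_copy off p q i j then cis (\<theta> i j) else 1)"

lemma run_cphase_layer:
  assumes "off + 2 * p * q \<le> length Y"
  shows "run_circuit (cphase_layer \<theta> off p q) \<psi> Y = cphase_factor \<theta> off p q Y * \<psi> Y"
proof -
  let ?D = "\<lambda>(i, j). if Y ! target_copy off q i j \<and> Y ! source_copy off p q i j then cis (\<theta> i j) else 1"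
  have "run_circuit (cphase_gates (\<theta> i j) (target_copy off q i j) (source_copy off p q i j)) \<psi>' Y
      = ?D (i, j) * \<psi>' Y" if "i < p" "j < q" for i j \<psi>'
    using target_copy_less[OF that, of off] source_copy_less[OF that, of off] assms
    unfolding prod.case by (intro run_cphase_gates) (auto simp: source_copy_def)
  then have "run_circuit (cphase_layer \<theta> off p q) \<psi> Y = (\<Prod>x\<leftarrow>List.product [0..<p] [0..<q]. ?D x) * \<psi> Y"
    unfolding cphase_layer_def by (intro run_concat_diagonal) auto
  also have "(\<Prod>x\<leftarrow>List.product [0..<p] [0..<q]. ?D x) = prod ?D ({..<p} \<times> {..<q})"
    by (simp add: prod.distinct_set_conv_list[symmetric] distinct_product atLeast0LessThan)
  finally show ?thesis by (simp add: cphase_factor_def prod.cartesian_product)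
qed

lemma run_kickback:
  assumes ok: "kickback_layout tg sr off p q N" and len: "length ys = N"
  shows "run_circuit (kickback tg sr \<theta> off p q) \<psi> ys =
    (\<Sum>b\<in>bitstrings p. (\<Prod>i<p. hadamard (ys ! tg i) (b ! i)) *
       cphase_factor \<theta> off p q (copy_flip tg sr off p q (put_bits ys tg p b)) *
       (\<Sum>c\<in>bitstrings p. (\<Prod>i<p. hadamard (b ! i) (c ! i)) * \<psi> (put_bits ys tg p c)))"
proof -
  have inj: "inj_on tg {..<p}" and targets: "\<And>Y. length Y = N \<Longrightarrow> \<forall>i<p. tg i < length Y"
    using ok by (auto simp: kickback_layout_def)
  let ?H = "one_qubit_layer (\<lambda>_. hadamard) tg p"
  let ?F = "fanout_layer tg sr off p q"
  define \<chi> where "\<chi> = run_circuit ?H \<psi>"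
  have middle: "run_circuit ?F (run_circuit (cphase_layer \<theta> off p q) (run_circuit ?F \<chi>)) Y =
      cphase_factor \<theta> off p q (copy_flip tg sr off p q Y) * \<chi> Y" if "length Y = N" for Y
    using copy_flip_copy_flip[OF ok that] ok that
    by (simp add: run_fanout_layer run_cphase_layer kickback_layout_def)
  have \<chi>: "\<chi> (put_bits ys tg p b) =
      (\<Sum>c\<in>bitstrings p. (\<Prod>i<p. hadamard (b ! i) (c ! i)) * \<psi> (put_bits ys tg p c))" for b
    unfolding \<chi>_def using inj targets[OF len] len
    by (simp add: run_one_qubit_layer targets put_bits_at put_bits_put_bits)
  show ?thesis
    unfolding kickback_def run_circuit_append \<chi>_def[symmetric]
    using run_one_qubit_layer[OF inj targets[OF len]] by (simp add: middle len \<chi> mult.assoc)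
qed

definition bool_sign :: "bool \<Rightarrow> complex" where
  "bool_sign b = (if b then -1 else 1)"

text \<open>The matrix of \<open>H \<cdot> diag(1, e^{i\<phi>}) \<cdot> H\<close>.\<close>

definition kick :: "real \<Rightarrow> bool \<Rightarrow> bool \<Rightarrow> complex" where
  "kick \<phi> y c = (1 + bool_sign y * bool_sign c * cis \<phi>) / 2"

lemma hadamard_phase_hadamard:
  "hadamard y False * 1 * hadamard False c + hadamard y True * cis \<phi> * hadamard True c = kick \<phi> y c"
proof -
  have "complex_of_real (sqrt 2) * complex_of_real (sqrt 2) = 2"
    by (simp flip: of_real_mult)
  then show ?thesis unfolding hadamard_def kick_def bool_sign_def
    by (cases y; cases c) (simp_all add: field_simps)
qed

lemma prod_cis_if:
  "(\<Prod>j<(q::nat). if B \<and> u j then cis (t j) else 1) = (if B then cis (\<Sum>j<q. if u j then t j else 0) else 1)"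
  by (induction q) (auto simp: cis_mult)

definition kick_angle :: "(nat \<Rightarrow> nat) \<Rightarrow> (nat \<Rightarrow> nat \<Rightarrow> real) \<Rightarrow> nat \<Rightarrow> bool list \<Rightarrow> nat \<Rightarrow> real" where
  "kick_angle sr \<theta> q ys i = (\<Sum>j<q. if ys ! sr j then \<theta> i j else 0)"

lemma cphase_factor_copy_flip:
  assumes ok: "kickback_layout tg sr off p q N" and len: "length ys = N"
    and clear: "\<forall>k\<in>{off..<off + 2 * p * q}. \<not> ys ! k"
  shows "cphase_factor \<theta> off p q (copy_flip tg sr off p q ys) =
    (\<Prod>i<p. if ys ! tg i then cis (kick_angle sr \<theta> q ys i) else 1)"
proof -
  let ?Y = "copy_flip tg sr off p q ys"
  have "?Y ! target_copy off q i j = ys ! tg i" "?Y ! source_copy off p q i j = ys ! sr j"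
    if "i < p" "j < q" for i j
    using nth_copy_flip[OF ok len] clear ok that target_copy_less[OF that, of off]
      source_copy_less[OF that, of off] copy_owner_target_copy[OF that] copy_owner_source_copy[OF that]
    by (auto simp: kickback_layout_def fanout_control_def target_copy_def source_copy_def)
  then have "cphase_factor \<theta> off p q ?Y = (\<Prod>i<p. \<Prod>j<q. if ys ! tg i \<and> ys ! sr j then cis (\<theta> i j) else 1)"
    unfolding cphase_factor_def by (intro prod.cong refl) simp
  then show ?thesis unfolding kick_angle_def by (simp add: prod_cis_if)
qed

lemma cphase_factor_put_targets:
  assumes ok: "kickback_layout tg sr off p q N" and len: "length ys = N"
    and clear: "\<forall>k\<in>{off..<off + 2 * p * q}. \<not> ys ! k"
  shows "cphase_factor \<theta> off p q (copy_flip tg sr off p q (put_bits ys tg p b)) =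
    (\<Prod>i<p. if b ! i then cis (kick_angle sr \<theta> q ys i) else 1)"
proof -
  have inj: "inj_on tg {..<p}" and targets: "\<forall>i<p. tg i < off" "off \<le> N"
    and sources: "\<forall>j<q. sr j \<notin> tg ` {..<p}"
    using ok by (force simp: kickback_layout_def)+
  have angle: "kick_angle sr \<theta> q (put_bits ys tg p b) i = kick_angle sr \<theta> q ys i" for i
    using sources by (auto simp: kick_angle_def put_bits_other intro!: sum.cong)
  have bits: "put_bits ys tg p b ! tg i = b ! i" if "i < p" for i
  proof -
    have "tg i < length ys" using targets that len by fastforce
    then show ?thesis using put_bits_at[OF inj that] by simp
  qed
  have "\<forall>k\<in>{off..<off + 2 * p * q}. \<not> put_bits ys tg p b ! k"
    using clear targets by (simp add: put_bits_above)
  then have "cphase_factor \<theta> off p q (copy_flip tg sr off p q (put_bits ys tg p b)) =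
      (\<Prod>i<p. if put_bits ys tg p b ! tg i then cis (kick_angle sr \<theta> q (put_bits ys tg p b) i) else 1)"
    using len by (intro cphase_factor_copy_flip[OF ok]) simp_all
  also have "\<dots> = (\<Prod>i<p. if b ! i then cis (kick_angle sr \<theta> q ys i) else 1)"
    by (intro prod.cong refl) (simp add: bits angle)
  finally show ?thesis .
qed

text \<open>On clean scratch qubits the gadget applies \<open>H \<cdot> diag(1, e^{i\<phi>\<^sub>i}) \<cdot> H\<close> to every target \<open>i\<close>,
  where \<open>\<phi>\<^sub>i = \<Sum>\<^sub>j s\<^sub>j \<theta> i j\<close> is controlled by the source bits \<open>s\<^sub>j\<close>.\<close>

lemma run_kickback_clear:
  assumes ok: "kickback_layout tg sr off p q N" and len: "length ys = N"
    and clear: "\<forall>k\<in>{off..<off + 2 * p * q}. \<not> ys ! k"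
  shows "run_circuit (kickback tg sr \<theta> off p q) \<psi> ys =
    (\<Sum>c\<in>bitstrings p. (\<Prod>i<p. kick (kick_angle sr \<theta> q ys i) (ys ! tg i) (c ! i)) * \<psi> (put_bits ys tg p c))"
proof -
  have "run_circuit (kickback tg sr \<theta> off p q) \<psi> ys =
      (\<Sum>c\<in>bitstrings p. (\<Sum>b\<in>bitstrings p. \<Prod>i<p. hadamard (ys ! tg i) (b ! i) *
         (if b ! i then cis (kick_angle sr \<theta> q ys i) else 1) * hadamard (b ! i) (c ! i)) * \<psi> (put_bits ys tg p c))"
    unfolding run_kickback[OF ok len] cphase_factor_put_targets[OF ok len clear] sum_distrib_left sum_distrib_right
    by (subst sum.swap) (simp add: prod.distrib algebra_simps)
  also have "\<dots> = (\<Sum>c\<in>bitstrings p.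
      (\<Prod>i<p. kick (kick_angle sr \<theta> q ys i) (ys ! tg i) (c ! i)) * \<psi> (put_bits ys tg p c))"
    by (intro sum.cong refl arg_cong2[where f="(*)"])
      (subst sum_bitstrings_prod, simp only: if_True if_False hadamard_phase_hadamard)
  finally show ?thesis .
qed

section \<open>Kick values and parity counts\<close>

lemma cis_pi_mult_nat: "cis (pi * real c) = (-1) ^ c"
  using DeMoivre[of pi c] by (simp add: mult.commute)

lemma kick_zero: "kick 0 y c = (if y = c then 1 else 0)"
  by (cases y; cases c) (simp_all add: kick_def bool_sign_def)

lemma kick_pi_mult_nat: "kick (pi * real k) y c = (if (y = c) = even k then 1 else 0)"
  by (cases y; cases c; cases "even k") (simp_all add: kick_def bool_sign_def cis_pi_mult_nat)

lemma kick_pi: "kick pi y c = (if y = c then 0 else 1)"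
  using kick_pi_mult_nat[of 1 y c] by simp

text \<open>The angle \<open>-\<phi>\<close> undoes the kick by \<open>\<phi>\<close> on a target that started in \<open>|0\<rangle>\<close>.\<close>

lemma kick_inverse:
  "kick (-\<phi>) y False * kick \<phi> False False + kick (-\<phi>) y True * kick \<phi> True False = (if y then 0 else 1)"
proof -
  have c: "cis (-\<phi>) * cis \<phi> = 1" by (simp add: cis_mult)
  have "(1 + a) * (1 + b) + (1 - a) * (1 - b) = 2 + 2 * (a * b)"
    and "(1 - a) * (1 + b) + (1 + a) * (1 - b) = 2 - 2 * (a * b)" for a b :: complex
    by (simp_all add: algebra_simps)
  from this[of "cis (-\<phi>)" "cis \<phi>"] c show ?thesis
    by (cases y) (simp_all add: kick_def bool_sign_def field_simps)
qed

lemma exists_pow2_mult_odd: "0 < (w::nat) \<Longrightarrow> \<exists>v d. w = 2 ^ v * d \<and> odd d"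
proof (induction w rule: less_induct)
  case (less w)
  show ?case
  proof (cases "odd w")
    case False
    then obtain u where u: "w = 2 * u" by (auto elim: evenE)
    moreover have "0 < u" "u < w" using u less.prems by auto
    ultimately obtain v d where "u = 2 ^ v * d" "odd d" using less.IH by blast
    then show ?thesis using u by (intro exI[of _ "Suc v"] exI[of _ d]) simp
  qed (intro exI[of _ 0] exI[of _ w], simp)
qed

lemma sum_lessThan_double: "(\<Sum>t<2 * M. g t) = (\<Sum>t<M. g (2 * t) + g (2 * t + 1))"
  for g :: "nat \<Rightarrow> 'a::comm_monoid_add"
  by (induction M) (simp_all add: add.assoc)

lemma sum_pow2_prod_bit:
  fixes f :: "nat \<Rightarrow> bool \<Rightarrow> 'a::comm_semiring_1"
  shows "(\<Sum>t<(2::nat) ^ m. \<Prod>k<m. f k (bit t k)) = (\<Prod>k<m. f k False + f k True)"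
proof (induction m arbitrary: f)
  case (Suc m)
  have "(\<Sum>t<(2::nat) ^ Suc m. \<Prod>k<Suc m. f k (bit t k))
      = (\<Sum>t<(2::nat) * 2 ^ m. f 0 (odd t) * (\<Prod>k<m. f (Suc k) (bit (t div 2) k)))"
    by (simp only: power_Suc prod.lessThan_Suc_shift bit_0 bit_Suc)
  also have "\<dots> = (f 0 False + f 0 True) * (\<Sum>t<(2::nat) ^ m. \<Prod>k<m. f (Suc k) (bit t k))"
    unfolding sum_lessThan_double by (simp add: algebra_simps sum_distrib_left sum.distrib)
  finally show ?case by (simp only: Suc.IH[of "\<lambda>k. f (Suc k)"] prod.lessThan_Suc_shift)
qed simp

text \<open>The parity of \<open>masked_popcount m s t\<close> is the inner product of \<open>t\<close> and \<open>s\<close> over GF(2).\<close>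

definition masked_popcount :: "nat \<Rightarrow> (nat \<Rightarrow> bool) \<Rightarrow> nat \<Rightarrow> nat" where
  "masked_popcount m s t = (\<Sum>k<m. if bit t k \<and> s k then 1 else 0)"

lemma sum_minus_one_power_masked_popcount:
  "(\<Sum>t<(2::nat) ^ m. (-1::real) ^ masked_popcount m s t) = (if \<exists>k<m. s k then 0 else 2 ^ m)"
proof -
  have "(\<Sum>t<(2::nat) ^ m. (-1::real) ^ masked_popcount m s t)
      = (\<Sum>t<(2::nat) ^ m. \<Prod>k<m. (\<lambda>k b. if b \<and> s k then -1 else (1::real)) k (bit t k))"
    unfolding masked_popcount_def power_sum by (intro sum.cong prod.cong refl) auto
  also have "\<dots> = (\<Prod>k<m. 1 + (if s k then -1 else 1))"
    by (subst sum_pow2_prod_bit) simp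
  also have "\<dots> = (if \<exists>k<m. s k then 0 else 2 ^ m)"
    by (auto intro: prod_zero)
  finally show ?thesis .
qed

lemma sum_odd_masked_popcount:
  assumes "(2::nat) ^ m = Suc P"
  shows "(\<Sum>t<P. if odd (masked_popcount m s (Suc t)) then (1::real) else 0) =
    (if \<exists>k<m. s k then 2 ^ m / 2 else 0)"
proof -
  have "(\<Sum>t<P. if odd (masked_popcount m s (Suc t)) then (1::real) else 0)
      = (\<Sum>t<(2::nat) ^ m. if odd (masked_popcount m s t) then 1 else 0)"
    unfolding assms by (simp only: sum.lessThan_Suc_shift) (simp add: masked_popcount_def)
  also have "\<dots> = (\<Sum>t<(2::nat) ^ m. (1 - (-1) ^ masked_popcount m s t) / 2)"
    by (intro sum.cong refl) auto
  also have "\<dots> = (2 ^ m - (\<Sum>t<(2::nat) ^ m. (-1::real) ^ masked_popcount m s t)) / 2"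
    by (simp add: sum_divide_distrib[symmetric] sum_subtractf)
  finally show ?thesis by (cases "\<exists>k<m. s k") (simp_all add: sum_minus_one_power_masked_popcount)
qed

section \<open>The OR circuit\<close>

definition count_width :: "nat \<Rightarrow> nat" where
  "count_width n = (LEAST m. n < 2 ^ m)"

definition num_parities :: "nat \<Rightarrow> nat" where
  "num_parities n = 2 ^ count_width n - 1"

definition count_qubit :: "nat \<Rightarrow> nat \<Rightarrow> nat" where
  "count_qubit n k = Suc n + k"

definition parity_qubit :: "nat \<Rightarrow> nat \<Rightarrow> nat" where
  "parity_qubit n t = Suc n + count_width n + t"

definition count_scratch :: "nat \<Rightarrow> nat" where
  "count_scratch n = Suc n + count_width n + num_parities n"

definition parity_scratch :: "nat \<Rightarrow> nat" where
  "parity_scratch n = count_scratch n + 2 * count_width n * n"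

definition or_scratch :: "nat \<Rightarrow> nat" where
  "or_scratch n = parity_scratch n + 2 * num_parities n * count_width n"

definition total_qubits :: "nat \<Rightarrow> nat" where
  "total_qubits n = or_scratch n + 2 * num_parities n"

definition num_ancillas :: "nat \<Rightarrow> nat" where
  "num_ancillas n = total_qubits n - Suc n"

text \<open>Count qubit \<open>k\<close> is kicked by \<open>\<pi> w / 2\<^sup>k\<close>, where \<open>w\<close> is the Hamming weight of the input;
  parity qubit \<open>t\<close> receives the inner product of \<open>t + 1\<close> with the count register; the output
  is kicked by \<open>\<pi> / 2\<^sup>m\<^sup>-\<^sup>1\<close> times the number of odd parities, i.e. by \<open>\<pi>\<close> or \<open>0\<close>.\<close>

definition count_angle :: "nat \<Rightarrow> nat \<Rightarrow> real" where
  "count_angle k j = pi / 2 ^ k"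

definition uncount_angle :: "nat \<Rightarrow> nat \<Rightarrow> real" where
  "uncount_angle k j = - (pi / 2 ^ k)"

definition parity_angle :: "nat \<Rightarrow> nat \<Rightarrow> real" where
  "parity_angle t k = (if bit (Suc t) k then pi else 0)"

definition or_angle :: "nat \<Rightarrow> nat \<Rightarrow> nat \<Rightarrow> real" where
  "or_angle n i t = pi / 2 ^ (count_width n - 1)"

definition count_stage :: "nat \<Rightarrow> gate list" where
  "count_stage n = kickback (count_qubit n) id count_angle (count_scratch n) (count_width n) n"

definition uncount_stage :: "nat \<Rightarrow> gate list" where
  "uncount_stage n = kickback (count_qubit n) id uncount_angle (count_scratch n) (count_width n) n"

definition parity_stage :: "nat \<Rightarrow> gate list" where
  "parity_stage n =
     kickback (parity_qubit n) (count_qubit n) parity_angle (parity_scratch n) (num_parities n) (count_width n)"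

definition or_stage :: "nat \<Rightarrow> gate list" where
  "or_stage n = kickback (\<lambda>_. n) (parity_qubit n) (or_angle n) (or_scratch n) 1 (num_parities n)"

definition or_circuit :: "nat \<Rightarrow> gate list" where
  "or_circuit n = count_stage n @ parity_stage n @ or_stage n @ parity_stage n @ uncount_stage n"

lemma less_pow2_count_width: "n < 2 ^ count_width n"
  unfolding count_width_def by (rule LeastI[of _ n]) (rule less_exp)

lemma count_width_pos: "1 \<le> n \<Longrightarrow> 1 \<le> count_width n"
  using less_pow2_count_width[of n] by (cases "count_width n") auto

lemma pow2_count_width_le: "1 \<le> n \<Longrightarrow> 2 ^ (count_width n - 1) \<le> n"
proof -
  assume "1 \<le> n"
  then have "count_width n - 1 < count_width n" using count_width_pos[OF \<open>1 \<le> n\<close>] by simp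
  then have "\<not> n < 2 ^ (count_width n - 1)" unfolding count_width_def by (rule not_less_Least)
  then show ?thesis by simp
qed

lemma pow2_count_width: "2 ^ count_width n = Suc (num_parities n)"
  by (simp add: num_parities_def)

lemma num_parities_pos: "1 \<le> n \<Longrightarrow> 1 \<le> num_parities n"
proof -
  assume "1 \<le> n"
  then have "2 ^ 1 \<le> (2::nat) ^ count_width n" using count_width_pos by (intro power_increasing) auto
  then show ?thesis by (simp add: num_parities_def)
qed

lemmas layout_defs = kickback_layout_def inj_on_def count_qubit_def parity_qubit_def
  count_scratch_def parity_scratch_def or_scratch_def total_qubits_def

lemma layout_count_stage:
  "kickback_layout (count_qubit n) id (count_scratch n) (count_width n) n (total_qubits n)"
  by (auto simp: layout_defs)

lemma layout_parity_stage: "kickback_layout (parity_qubit n) (count_qubit n) (parity_scratch n)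
    (num_parities n) (count_width n) (total_qubits n)"
  by (auto simp: layout_defs)

lemma layout_or_stage: "kickback_layout (\<lambda>_. n) (parity_qubit n) (or_scratch n) 1 (num_parities n) (total_qubits n)"
  by (auto simp: layout_defs)

lemma total_qubits_eq: "Suc n + num_ancillas n = total_qubits n"
  by (simp add: num_ancillas_def total_qubits_def or_scratch_def parity_scratch_def count_scratch_def)

lemma count_qubit_less_scratch: "k < count_width n \<Longrightarrow> count_qubit n k < count_scratch n"
  by (simp add: count_qubit_def count_scratch_def)

lemma parity_qubit_less_scratch: "t < num_parities n \<Longrightarrow> parity_qubit n t < count_scratch n"
  by (simp add: parity_qubit_def count_scratch_def)

lemma count_scratch_le_total: "count_scratch n \<le> total_qubits n"
  by (simp add: total_qubits_def or_scratch_def parity_scratch_def)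

lemma output_less_total: "n < total_qubits n"
  using count_scratch_le_total[of n] by (simp add: count_scratch_def)

definition scratch_clear :: "nat \<Rightarrow> bool list \<Rightarrow> bool" where
  "scratch_clear n ys \<longleftrightarrow> (\<forall>k\<in>{count_scratch n..<total_qubits n}. \<not> ys ! k)"

definition count_clear :: "nat \<Rightarrow> bool list \<Rightarrow> bool" where
  "count_clear n ys \<longleftrightarrow> (\<forall>k<count_width n. \<not> ys ! count_qubit n k)"

definition parities_clear :: "nat \<Rightarrow> bool list \<Rightarrow> bool" where
  "parities_clear n ys \<longleftrightarrow> (\<forall>t<num_parities n. \<not> ys ! parity_qubit n t)"

definition count_parity :: "nat \<Rightarrow> bool list \<Rightarrow> nat \<Rightarrow> bool" where
  "count_parity n ys t = odd (masked_popcount (count_width n) (\<lambda>k. ys ! count_qubit n k) (Suc t))"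

definition parities_correct :: "nat \<Rightarrow> bool list \<Rightarrow> bool" where
  "parities_correct n ys \<longleftrightarrow> (\<forall>t<num_parities n. ys ! parity_qubit n t = count_parity n ys t)"

definition data_or :: "nat \<Rightarrow> bool list \<Rightarrow> bool" where
  "data_or n ys \<longleftrightarrow> (\<exists>j<n. ys ! j)"

definition count_nonzero :: "nat \<Rightarrow> bool list \<Rightarrow> bool" where
  "count_nonzero n ys \<longleftrightarrow> (\<exists>k<count_width n. ys ! count_qubit n k)"

lemma ancilla_qubits: "{Suc n..<total_qubits n} = count_qubit n ` {..<count_width n} \<union>
    parity_qubit n ` {..<num_parities n} \<union> {count_scratch n..<total_qubits n}"
proof -
  have "k \<in> count_qubit n ` {..<count_width n} \<union> parity_qubit n ` {..<num_parities n} \<union>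
      {count_scratch n..<total_qubits n}" if "k \<in> {Suc n..<total_qubits n}" for k
  proof -
    consider "k < Suc n + count_width n" | "k \<ge> Suc n + count_width n" "k < count_scratch n"
      | "k \<ge> count_scratch n" by (fastforce simp: count_scratch_def not_less)
    then show ?thesis
    proof cases
      case 1
      then show ?thesis using that
        by (intro UnI1 image_eqI[of _ _ "k - Suc n"]) (auto simp: count_qubit_def)
    next
      case 2
      then show ?thesis
        by (intro UnI1 UnI2 image_eqI[of _ _ "k - Suc n - count_width n"])
          (auto simp: parity_qubit_def count_scratch_def)
    qed (use that in auto)
  qed
  moreover have "count_qubit n k \<in> {Suc n..<total_qubits n}" if "k < count_width n" for k
    using that count_qubit_less_scratch count_scratch_le_total[of n] by (fastforce simp: count_qubit_def)
  moreover have "parity_qubit n t \<in> {Suc n..<total_qubits n}" if "t < num_parities n" for t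
    using that parity_qubit_less_scratch count_scratch_le_total[of n] by (fastforce simp: parity_qubit_def)
  moreover have "{count_scratch n..<total_qubits n} \<subseteq> {Suc n..<total_qubits n}"
    by (auto simp: count_scratch_def)
  ultimately show ?thesis by blast
qed

lemma with_ancillas_eq:
  assumes "length ys = total_qubits n"
  shows "with_ancillas (Suc n) (num_ancillas n) \<psi> ys =
    (if scratch_clear n ys \<and> parities_clear n ys \<and> count_clear n ys then \<psi> (take (Suc n) ys) else 0)"
proof -
  have "drop (Suc n) ys = replicate (num_ancillas n) False \<longleftrightarrow> (\<forall>i<num_ancillas n. \<not> ys ! (Suc n + i))"
    using assms total_qubits_eq[of n] by (auto simp: list_eq_iff_nth_eq)
  also have "\<dots> \<longleftrightarrow> (\<forall>k\<in>{Suc n..<total_qubits n}. \<not> ys ! k)"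
  proof -
    have "k = Suc n + (k - Suc n) \<and> k - Suc n < num_ancillas n" if "k \<in> {Suc n..<total_qubits n}" for k
      using that total_qubits_eq[of n] by auto
    then show ?thesis using total_qubits_eq[of n] by fastforce
  qed
  also have "\<dots> \<longleftrightarrow> scratch_clear n ys \<and> parities_clear n ys \<and> count_clear n ys"
    unfolding ancilla_qubits by (auto simp: scratch_clear_def parities_clear_def count_clear_def)
  finally show ?thesis unfolding with_ancillas_def total_qubits_eq using assms by simp
qed

lemma scratch_clear_put_bits:
  "\<forall>i<p. g i < count_scratch n \<Longrightarrow> scratch_clear n (put_bits ys g p c) = scratch_clear n ys"
  unfolding scratch_clear_def using put_bits_above[of p g "count_scratch n"] by auto

lemma run_stage:
  assumes ok: "kickback_layout tg sr off p q (total_qubits n)" and "count_scratch n \<le> off"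
    and targets: "\<forall>i<p. tg i < count_scratch n" and len: "length ys = total_qubits n"
    and vanish: "\<And>Y. length Y = total_qubits n \<Longrightarrow> \<not> scratch_clear n Y \<Longrightarrow> \<chi> Y = 0"
  shows "run_circuit (kickback tg sr \<theta> off p q) \<chi> ys =
    (if scratch_clear n ys then (\<Sum>c\<in>bitstrings p.
       (\<Prod>i<p. kick (kick_angle sr \<theta> q ys i) (ys ! tg i) (c ! i)) * \<chi> (put_bits ys tg p c)) else 0)"
proof (cases "scratch_clear n ys")
  case True
  have "off + 2 * p * q \<le> total_qubits n" using ok by (simp add: kickback_layout_def)
  then have "\<forall>k\<in>{off..<off + 2 * p * q}. \<not> ys ! k"
    using True assms(2) by (auto simp: scratch_clear_def)
  then show ?thesis using True run_kickback_clear[OF ok len] by simp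
next
  case False
  have "\<chi> (put_bits ys tg p c) = 0" for c
    using targets vanish scratch_clear_put_bits False len by simp
  then show ?thesis using False run_kickback[OF ok len] by simp
qed

definition hamming_weight :: "nat \<Rightarrow> bool list \<Rightarrow> nat" where
  "hamming_weight n ys = (\<Sum>j<n. if ys ! j then 1 else 0)"

text \<open>The amplitude with which the count stage leaves the count register in \<open>ys\<close> when it
  started in \<open>|0\<rangle>\<close>.\<close>

definition count_amplitude :: "nat \<Rightarrow> bool list \<Rightarrow> complex" where
  "count_amplitude n ys =
     (\<Prod>k<count_width n. kick (pi * hamming_weight n ys / 2 ^ k) (ys ! count_qubit n k) False)"

lemma hamming_weight_le: "hamming_weight n ys \<le> n"
proof -
  have "hamming_weight n ys \<le> (\<Sum>j<n. 1)" unfolding hamming_weight_def by (intro sum_mono) auto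
  then show ?thesis by simp
qed

lemma hamming_weight_eq_0_iff: "hamming_weight n ys = 0 \<longleftrightarrow> \<not> data_or n ys"
  by (auto simp: hamming_weight_def data_or_def)

lemma count_amplitude_weight_0:
  assumes "hamming_weight n ys = 0" and "count_amplitude n ys \<noteq> 0"
  shows "count_clear n ys"
proof -
  have "count_amplitude n ys = (\<Prod>k<count_width n. if \<not> ys ! count_qubit n k then 1 else 0)"
    unfolding count_amplitude_def assms(1) by (intro prod.cong refl) (simp add: kick_zero)
  then show ?thesis using assms(2) by (simp add: prod_indicator count_clear_def split: if_splits)
qed

text \<open>If \<open>0 < w < 2\<^sup>m\<close> and \<open>w = 2\<^sup>v d\<close> with \<open>d\<close> odd, the kick by \<open>\<pi> w / 2\<^sup>v\<close> on count qubit
  \<open>v\<close> is a bit flip, so the count register cannot end up all zero.\<close>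

lemma count_amplitude_weight_pos:
  assumes "0 < hamming_weight n ys" and "count_clear n ys"
  shows "count_amplitude n ys = 0"
proof -
  let ?w = "hamming_weight n ys"
  obtain v d where vd: "?w = 2 ^ v * d" "odd d" using exists_pow2_mult_odd[OF assms(1)] by blast
  have "2 ^ v \<le> ?w" using vd by (cases d) auto
  also have "\<dots> < 2 ^ count_width n"
    using hamming_weight_le[of n ys] less_pow2_count_width[of n] by linarith
  finally have v: "v < count_width n" by simp
  have "pi * real ?w / 2 ^ v = pi * real d" unfolding vd(1) by (simp add: field_simps)
  then have "kick (pi * real ?w / 2 ^ v) (ys ! count_qubit n v) False = 0"
    using assms(2) v vd(2) by (simp add: kick_pi_mult_nat count_clear_def)
  then show ?thesis unfolding count_amplitude_def using v by (intro prod_zero) auto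
qed

lemma count_nonzero_iff_data_or:
  "count_amplitude n ys \<noteq> 0 \<Longrightarrow> count_nonzero n ys \<longleftrightarrow> data_or n ys"
  using count_amplitude_weight_0[of n ys] count_amplitude_weight_pos[of n ys] hamming_weight_eq_0_iff[of n ys]
  by (auto simp: count_nonzero_def count_clear_def)

lemma count_amplitude_cong:
  "\<forall>j<n. Y' ! j = Y ! j \<Longrightarrow> \<forall>k<count_width n. Y' ! count_qubit n k = Y ! count_qubit n k \<Longrightarrow>
   count_amplitude n Y' = count_amplitude n Y"
  unfolding count_amplitude_def hamming_weight_def by (intro prod.cong refl) (auto intro!: sum.cong)

lemma count_parity_cong:
  "\<forall>k<count_width n. Y' ! count_qubit n k = Y ! count_qubit n k \<Longrightarrow> count_parity n Y' = count_parity n Y"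
  unfolding count_parity_def masked_popcount_def by (intro ext) (auto intro!: sum.cong arg_cong[where f=odd])

lemma kick_angle_count: "kick_angle id count_angle n ys k = pi * hamming_weight n ys / 2 ^ k"
  unfolding kick_angle_def count_angle_def hamming_weight_def
  by (simp add: of_nat_sum sum_distrib_left sum_divide_distrib, intro sum.cong refl, simp)

lemma kick_angle_uncount: "kick_angle id uncount_angle n ys k = - kick_angle id count_angle n ys k"
  unfolding kick_angle_def count_angle_def uncount_angle_def
  by (simp add: sum_negf[symmetric] if_distrib cong: if_cong)

lemma kick_parity:
  "kick (kick_angle (count_qubit n) parity_angle (count_width n) ys t) a c =
    (if c = (a \<noteq> count_parity n ys t) then 1 else 0)"
proof -
  have "kick_angle (count_qubit n) parity_angle (count_width n) ys t =
      pi * real (masked_popcount (count_width n) (\<lambda>k. ys ! count_qubit n k) (Suc t))"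
    unfolding kick_angle_def parity_angle_def masked_popcount_def
    by (simp add: of_nat_sum sum_distrib_left, intro sum.cong refl, simp)
  then show ?thesis by (auto simp: kick_pi_mult_nat count_parity_def)
qed

lemma kick_angle_or:
  assumes "1 \<le> n" and "parities_correct n ys"
  shows "kick_angle (parity_qubit n) (or_angle n) (num_parities n) ys 0 = (if count_nonzero n ys then pi else 0)"
proof -
  have "kick_angle (parity_qubit n) (or_angle n) (num_parities n) ys 0 =
      pi / 2 ^ (count_width n - 1) * (\<Sum>t<num_parities n. if count_parity n ys t then 1 else 0)"
    using assms(2) unfolding kick_angle_def or_angle_def parities_correct_def
    by (simp add: sum_distrib_left if_distrib cong: if_cong)
  also have "\<dots> = pi / 2 ^ (count_width n - 1) * (if count_nonzero n ys then 2 ^ count_width n / 2 else 0)"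
    using sum_odd_masked_popcount[OF pow2_count_width[of n], of "\<lambda>k. ys ! count_qubit n k"]
    by (simp add: count_parity_def count_nonzero_def)
  also have "\<dots> = (if count_nonzero n ys then pi else 0)"
    using count_width_pos[OF assms(1)] by (simp add: power_diff)
  finally show ?thesis .
qed

text \<open>Between the stages the state has this shape: clean scratch, a side condition \<open>R\<close> on the
  parity register, the count register with amplitude \<open>count_amplitude\<close>, and a function \<open>F\<close> of
  the data and output qubits.\<close>

definition stage_state :: "nat \<Rightarrow> (bool list \<Rightarrow> bool) \<Rightarrow> qstate \<Rightarrow> qstate" where
  "stage_state n R F Y = (if scratch_clear n Y \<and> R Y then count_amplitude n Y * F (take (Suc n) Y) else 0)"

abbreviation put_count :: "nat \<Rightarrow> bool list \<Rightarrow> bool list \<Rightarrow> bool list" where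
  "put_count n ys c \<equiv> put_bits ys (count_qubit n) (count_width n) c"

lemma put_count_at:
  assumes "length ys = total_qubits n" "k < count_width n"
  shows "put_count n ys c ! count_qubit n k = c ! k"
proof -
  have "count_qubit n k < length ys"
    using assms count_qubit_less_scratch count_scratch_le_total less_le_trans by metis
  then show ?thesis using assms(2) by (intro put_bits_at) (auto simp: inj_on_def count_qubit_def)
qed

lemma put_count_below: "k < Suc n \<Longrightarrow> put_count n ys c ! k = ys ! k"
  by (rule put_bits_below) (auto simp: count_qubit_def)

lemma take_put_count: "take (Suc n) (put_count n ys c) = take (Suc n) ys"
  by (rule take_put_bits) (simp add: count_qubit_def)

lemma parities_clear_put_count: "parities_clear n (put_count n ys c) = parities_clear n ys"
  unfolding parities_clear_def
  by (simp add: put_bits_above[of _ _ "Suc n + count_width n"] count_qubit_def parity_qubit_def)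

lemma scratch_clear_put_count: "scratch_clear n (put_count n ys c) = scratch_clear n ys"
  by (simp add: scratch_clear_put_bits count_qubit_less_scratch)

lemma count_amplitude_put_count:
  assumes "length ys = total_qubits n"
  shows "count_amplitude n (put_count n ys c) =
    (\<Prod>k<count_width n. kick (pi * hamming_weight n ys / 2 ^ k) (c ! k) False)"
proof -
  have "hamming_weight n (put_count n ys c) = hamming_weight n ys"
    unfolding hamming_weight_def by (intro sum.cong) (simp_all add: put_count_below)
  then show ?thesis unfolding count_amplitude_def using assms by (simp add: put_count_at)
qed

lemma run_count_stage:
  assumes len: "length ys = total_qubits n"
  shows "run_circuit (count_stage n) (with_ancillas (Suc n) (num_ancillas n) \<psi>) ys =
    stage_state n (parities_clear n) \<psi> ys"
proof (cases "scratch_clear n ys")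
  case True
  let ?W = "with_ancillas (Suc n) (num_ancillas n) \<psi>"
  let ?zero = "replicate (count_width n) False"
  have W: "?W (put_count n ys c) = (if parities_clear n ys \<and> (\<forall>k<count_width n. \<not> c ! k)
      then \<psi> (take (Suc n) ys) else 0)" for c
    using with_ancillas_eq[of "put_count n ys c" n \<psi>] len True
    by (auto simp: scratch_clear_put_count parities_clear_put_count take_put_count put_count_at count_clear_def)
  have "run_circuit (count_stage n) ?W ys = (\<Sum>c\<in>bitstrings (count_width n).
      (\<Prod>i<count_width n. kick (kick_angle id count_angle n ys i) (ys ! count_qubit n i) (c ! i)) *
      ?W (put_count n ys c))"
    unfolding count_stage_def using True len count_qubit_less_scratch
    by (subst run_stage[OF layout_count_stage]) (auto simp: with_ancillas_eq)
  also have "\<dots> = (\<Prod>i<count_width n. kick (kick_angle id count_angle n ys i) (ys ! count_qubit n i) (?zero ! i)) *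
      ?W (put_count n ys ?zero)"
    by (rule sum_bitstrings_single) (auto simp: W bitstrings_def)
  also have "\<dots> = stage_state n (parities_clear n) \<psi> ys"
    using True by (simp add: W stage_state_def count_amplitude_def kick_angle_count)
  finally show ?thesis .
next
  case False
  then show ?thesis unfolding count_stage_def using len count_qubit_less_scratch
    by (subst run_stage[OF layout_count_stage]) (auto simp: with_ancillas_eq stage_state_def)
qed

text \<open>On clean scratch the parity stage is the basis permutation adding each parity to its
  parity qubit.\<close>

definition parity_flip :: "nat \<Rightarrow> bool list \<Rightarrow> bool list" where
  "parity_flip n ys = put_bits ys (parity_qubit n) (num_parities n)
     (map (\<lambda>t. ys ! parity_qubit n t \<noteq> count_parity n ys t) [0..<num_parities n])"

lemma length_parity_flip [simp]: "length (parity_flip n ys) = length ys"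
  by (simp add: parity_flip_def)

lemma parity_flip_below: "k < Suc n + count_width n \<Longrightarrow> parity_flip n ys ! k = ys ! k"
  unfolding parity_flip_def by (rule put_bits_below) (auto simp: parity_qubit_def)

lemma parity_flip_at:
  assumes "length ys = total_qubits n" "t < num_parities n"
  shows "parity_flip n ys ! parity_qubit n t = (ys ! parity_qubit n t \<noteq> count_parity n ys t)"
proof -
  have "parity_qubit n t < length ys"
    using assms parity_qubit_less_scratch count_scratch_le_total less_le_trans by metis
  then show ?thesis unfolding parity_flip_def using assms(2)
    by (subst put_bits_at) (auto simp: inj_on_def parity_qubit_def)
qed

lemma parity_flip_frame:
  assumes "length ys = total_qubits n"
  shows "take (Suc n) (parity_flip n ys) = take (Suc n) ys"
    and "scratch_clear n (parity_flip n ys) = scratch_clear n ys"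
    and "count_amplitude n (parity_flip n ys) = count_amplitude n ys"
    and "count_parity n (parity_flip n ys) = count_parity n ys"
proof -
  show "take (Suc n) (parity_flip n ys) = take (Suc n) ys"
    by (intro nth_equalityI) (auto simp: parity_flip_below)
  show "scratch_clear n (parity_flip n ys) = scratch_clear n ys"
    unfolding parity_flip_def by (simp add: scratch_clear_put_bits parity_qubit_less_scratch)
  show "count_amplitude n (parity_flip n ys) = count_amplitude n ys"
    by (intro count_amplitude_cong) (auto simp: parity_flip_below count_qubit_def)
  show "count_parity n (parity_flip n ys) = count_parity n ys"
    by (intro count_parity_cong) (auto simp: parity_flip_below count_qubit_def)
qed

lemma parities_clear_parity_flip:
  "length ys = total_qubits n \<Longrightarrow> parities_clear n (parity_flip n ys) = parities_correct n ys"
  by (auto simp: parities_clear_def parities_correct_def parity_flip_at)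

lemma parities_correct_parity_flip:
  "length ys = total_qubits n \<Longrightarrow> parities_correct n (parity_flip n ys) = parities_clear n ys"
  by (auto simp: parities_clear_def parities_correct_def parity_flip_at parity_flip_frame)

lemma run_parity_stage:
  assumes len: "length ys = total_qubits n"
    and vanish: "\<And>Y. length Y = total_qubits n \<Longrightarrow> \<not> scratch_clear n Y \<Longrightarrow> \<chi> Y = 0"
  shows "run_circuit (parity_stage n) \<chi> ys = (if scratch_clear n ys then \<chi> (parity_flip n ys) else 0)"
proof -
  let ?P = "num_parities n"
  let ?v = "map (\<lambda>t. ys ! parity_qubit n t \<noteq> count_parity n ys t) [0..<?P]"
  let ?term = "\<lambda>c. (\<Prod>t<?P. kick (kick_angle (count_qubit n) parity_angle (count_width n) ys t)
      (ys ! parity_qubit n t) (c ! t)) * \<chi> (put_bits ys (parity_qubit n) ?P c)"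
  have "?term c = 0" if "\<exists>t<?P. c ! t \<noteq> ?v ! t" for c
  proof -
    from that obtain t where "t < ?P" "c ! t \<noteq> ?v ! t" by blast
    then have "kick (kick_angle (count_qubit n) parity_angle (count_width n) ys t) (ys ! parity_qubit n t) (c ! t) = 0"
      by (simp add: kick_parity)
    then show ?thesis using \<open>t < ?P\<close> by (simp add: prod_zero) blast
  qed
  then have "sum ?term (bitstrings ?P) = ?term ?v"
    by (intro sum_bitstrings_single) (simp_all add: bitstrings_def)
  also have "\<dots> = \<chi> (parity_flip n ys)"
    by (simp add: kick_parity parity_flip_def)
  finally show ?thesis unfolding parity_stage_def using len vanish parity_qubit_less_scratch
    by (subst run_stage[OF layout_parity_stage]) (auto simp: parity_scratch_def)
qed

lemma run_parity_stage_state: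
  assumes len: "length ys = total_qubits n"
    and state: "\<And>Y. length Y = total_qubits n \<Longrightarrow> \<chi> Y = stage_state n R F Y"
  shows "run_circuit (parity_stage n) \<chi> ys = stage_state n (\<lambda>Y. R (parity_flip n Y)) F ys"
  using len state by (subst run_parity_stage) (auto simp: stage_state_def parity_flip_frame)

lemma stage_state_update_output:
  assumes "length ys = total_qubits n"
  shows "stage_state n (parities_correct n) F (ys[n := d]) =
    (if scratch_clear n ys \<and> parities_correct n ys then count_amplitude n ys * F (take n ys @ [d]) else 0)"
proof -
  have "scratch_clear n (ys[n := d]) = scratch_clear n ys"
    by (auto simp: scratch_clear_def count_scratch_def)
  moreover have "parities_correct n (ys[n := d]) = parities_correct n ys"
    using count_parity_cong[of n "ys[n := d]" ys]
    by (auto simp: parities_correct_def parity_qubit_def count_qubit_def)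
  moreover have "count_amplitude n (ys[n := d]) = count_amplitude n ys"
    by (intro count_amplitude_cong) (auto simp: count_qubit_def)
  ultimately show ?thesis using assms output_less_total[of n]
    by (simp add: stage_state_def take_Suc_conv_app_nth)
qed

text \<open>The output qubit is flipped exactly when the count register is nonzero, which on the
  support of the state is the OR of the data.\<close>

lemma OR_bits_take: "n \<le> length ys \<Longrightarrow> OR_bits (take n ys) = data_or n ys"
  by (auto simp: OR_bits_def data_or_def nth_image[symmetric])

lemma run_or_stage:
  assumes "1 \<le> n" and len: "length ys = total_qubits n"
    and state: "\<And>Y. length Y = total_qubits n \<Longrightarrow> \<chi> Y = stage_state n (parities_correct n) F Y"
  shows "run_circuit (or_stage n) \<chi> ys = stage_state n (parities_correct n) (OR_op n F) ys"
proof -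
  let ?\<phi> = "kick_angle (parity_qubit n) (or_angle n) (num_parities n) ys 0"
  have n: "n < length ys" using len output_less_total by simp
  then have "n \<le> length ys" by simp
  have update: "\<chi> (ys[n := d]) = (if scratch_clear n ys \<and> parities_correct n ys
      then count_amplitude n ys * F (take n ys @ [d]) else 0)" for d
    using state[of "ys[n := d]"] len by (simp add: stage_state_update_output)
  have run: "run_circuit (or_stage n) \<chi> ys = (if scratch_clear n ys then
      kick ?\<phi> (ys ! n) False * \<chi> (ys[n := False]) + kick ?\<phi> (ys ! n) True * \<chi> (ys[n := True]) else 0)"
    unfolding or_stage_def using len state
    by (subst run_stage[OF layout_or_stage])
      (auto simp: stage_state_def sum_bitstrings_1 or_scratch_def parity_scratch_def count_scratch_def)
  show ?thesis
  proof (cases "scratch_clear n ys \<and> parities_correct n ys")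
    case True
    have "OR_op n F (take (Suc n) ys) = F (take n ys @ [ys ! n \<noteq> OR_bits (take n ys)])"
      using n by (simp add: OR_op_def min_def)
    moreover have "OR_bits (take n ys) = data_or n ys"
      using \<open>n \<le> length ys\<close> by (rule OR_bits_take)
    ultimately have "count_amplitude n ys * OR_op n F (take (Suc n) ys) =
        count_amplitude n ys * F (take n ys @ [ys ! n \<noteq> count_nonzero n ys])"
      using count_nonzero_iff_data_or by (cases "count_amplitude n ys = 0") auto
    moreover have "run_circuit (or_stage n) \<chi> ys = \<chi> (ys[n := ys ! n \<noteq> count_nonzero n ys])"
      using True kick_angle_or[OF assms(1)] unfolding run
      by (cases "ys ! n"; cases "count_nonzero n ys") (simp_all add: kick_pi kick_zero)
    ultimately show ?thesis using True by (auto simp: update stage_state_def)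
  next
    case False
    then show ?thesis by (simp add: run update stage_state_def)
  qed
qed

lemma run_uncount_stage:
  assumes len: "length ys = total_qubits n"
    and state: "\<And>Y. length Y = total_qubits n \<Longrightarrow> \<chi> Y = stage_state n (parities_clear n) F Y"
  shows "run_circuit (uncount_stage n) \<chi> ys = with_ancillas (Suc n) (num_ancillas n) F ys"
proof (cases "scratch_clear n ys \<and> parities_clear n ys")
  case True
  let ?m = "count_width n"
  let ?\<phi> = "\<lambda>k. pi * hamming_weight n ys / 2 ^ k"
  let ?G = "F (take (Suc n) ys)"
  have \<chi>: "\<chi> (put_count n ys c) = (\<Prod>k<?m. kick (?\<phi> k) (c ! k) False) * ?G" for c
    using state[of "put_count n ys c"] len True
    by (simp add: stage_state_def scratch_clear_put_count parities_clear_put_count take_put_count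
        count_amplitude_put_count)
  have "run_circuit (uncount_stage n) \<chi> ys = (\<Sum>c\<in>bitstrings ?m.
      \<Prod>k<?m. kick (- ?\<phi> k) (ys ! count_qubit n k) (c ! k) * kick (?\<phi> k) (c ! k) False) * ?G"
    unfolding uncount_stage_def using True len state count_qubit_less_scratch
    by (subst run_stage[OF layout_count_stage])
      (auto simp: stage_state_def \<chi> kick_angle_uncount kick_angle_count sum_distrib_right prod.distrib mult.assoc)
  also have "\<dots> = (\<Prod>k<?m. if \<not> ys ! count_qubit n k then 1 else 0) * ?G"
    by (subst sum_bitstrings_prod) (simp add: kick_inverse, intro disjI2 prod.cong refl, auto)
  also have "\<dots> = with_ancillas (Suc n) (num_ancillas n) F ys"
    using True len by (auto simp: with_ancillas_eq prod_indicator count_clear_def)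
  finally show ?thesis .
next
  case False
  then show ?thesis unfolding uncount_stage_def using len state count_qubit_less_scratch
    by (subst run_stage[OF layout_count_stage])
      (auto simp: stage_state_def with_ancillas_eq scratch_clear_put_count parities_clear_put_count)
qed

lemma run_circuit_wrong_length:
  assumes "\<And>Y. length Y \<noteq> N \<Longrightarrow> \<psi> Y = 0" and "length ys \<noteq> N"
  shows "run_circuit C \<psi> ys = 0"
  using assms
proof (induction C arbitrary: \<psi>)
  case (Cons g C)
  have "apply_gate g \<psi> Y = 0" if "length Y \<noteq> N" for Y
    using Cons.prems(1) that by (cases g) auto
  then show ?case using Cons.IH Cons.prems(2) by simp
qed simp

lemma or_circuit_implements_OR:
  assumes "1 \<le> n"
  shows "implements_OR n (num_ancillas n) (or_circuit n)"
  unfolding implements_OR_def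
proof (intro allI ext)
  fix \<psi> :: qstate and ys :: "bool list"
  let ?W = "with_ancillas (Suc n) (num_ancillas n)"
  show "run_circuit (or_circuit n) (?W \<psi>) ys = ?W (OR_op n \<psi>) ys"
  proof (cases "length ys = total_qubits n")
    case True
    define \<chi>1 where "\<chi>1 = run_circuit (count_stage n) (?W \<psi>)"
    define \<chi>2 where "\<chi>2 = run_circuit (parity_stage n) \<chi>1"
    define \<chi>3 where "\<chi>3 = run_circuit (or_stage n) \<chi>2"
    define \<chi>4 where "\<chi>4 = run_circuit (parity_stage n) \<chi>3"
    have "\<chi>1 Y = stage_state n (parities_clear n) \<psi> Y" if "length Y = total_qubits n" for Y
      unfolding \<chi>1_def using that by (rule run_count_stage)
    then have "\<chi>2 Y = stage_state n (parities_correct n) \<psi> Y" if "length Y = total_qubits n" for Y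
      unfolding \<chi>2_def using that by (simp add: run_parity_stage_state stage_state_def parities_clear_parity_flip)
    then have "\<chi>3 Y = stage_state n (parities_correct n) (OR_op n \<psi>) Y" if "length Y = total_qubits n" for Y
      unfolding \<chi>3_def using that assms by (simp add: run_or_stage)
    then have "\<chi>4 Y = stage_state n (parities_clear n) (OR_op n \<psi>) Y" if "length Y = total_qubits n" for Y
      unfolding \<chi>4_def using that by (simp add: run_parity_stage_state stage_state_def parities_correct_parity_flip)
    then have "run_circuit (uncount_stage n) \<chi>4 ys = ?W (OR_op n \<psi>) ys"
      using True by (simp add: run_uncount_stage)
    then show ?thesis by (simp add: or_circuit_def run_circuit_append \<chi>1_def \<chi>2_def \<chi>3_def \<chi>4_def)
  next
    case False
    have "?W \<phi> Y = 0" if "length Y \<noteq> total_qubits n" for \<phi> Y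
      using that total_qubits_eq[of n] by (auto simp: with_ancillas_def)
    then show ?thesis using False run_circuit_wrong_length by metis
  qed
qed

section \<open>Well-formedness, depth and size\<close>

lemma unitary2_hadamard: "unitary2 hadamard"
proof -
  have "complex_of_real (sqrt 2) * complex_of_real (sqrt 2) = 2"
    by (simp flip: of_real_mult)
  then show ?thesis unfolding unitary2_def hadamard_def by (auto simp: UNIV_bool field_simps)
qed

lemma unitary2_phase_gate: "unitary2 (phase_gate \<theta>)"
proof -
  have "cnj (cis \<theta>) * cis \<theta> = 1" by (simp add: cis_cnj cis_mult)
  then show ?thesis unfolding unitary2_def phase_gate_def by (auto simp: UNIV_bool)
qed

lemma wf_kickback:
  assumes ok: "kickback_layout tg sr off p q N" and "1 \<le> p" "1 \<le> q"
  shows "wf_circuit N (kickback tg sr \<theta> off p q)"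
proof -
  have N: "off + 2 * p * q \<le> N" using ok by (simp add: kickback_layout_def)
  have "wf_gate N g" if "g \<in> set (one_qubit_layer (\<lambda>_. hadamard) tg p)" for g
    using that ok N by (auto simp: one_qubit_layer_def unitary2_hadamard kickback_layout_def)
  moreover have "wf_gate N g" if "g \<in> set (fanout_layer tg sr off p q)" for g
  proof -
    from that obtain l where l: "l < p + q" "g = Fanout (fanout_control tg sr p l) (fanout_targets off p q l)"
      by (auto simp: fanout_layer_def)
    moreover have "fanout_targets off p q l \<noteq> []" using l(1) assms(2,3) by (auto simp: fanout_targets_def)
    ultimately show ?thesis using fanout_control_less[OF ok l(1)] mem_fanout_targets[OF l(1)] N
        distinct_fanout_targets[OF l(1)]
      by fastforce
  qed
  moreover have "wf_gate N g" if "g \<in> set (cphase_layer \<theta> off p q)" for g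
  proof -
    from that obtain i j where ij: "i < p" "j < q"
      "g \<in> set (cphase_gates (\<theta> i j) (target_copy off q i j) (source_copy off p q i j))"
      by (auto simp: cphase_layer_def)
    then show ?thesis using target_copy_less[OF ij(1,2), of off] source_copy_less[OF ij(1,2), of off] N
      by (auto simp: cphase_gates_def unitary2_phase_gate source_copy_def)
  qed
  ultimately show ?thesis by (auto simp: wf_circuit_def kickback_def)
qed

lemma wf_or_circuit: "1 \<le> n \<Longrightarrow> wf_circuit (Suc n + num_ancillas n) (or_circuit n)"
  unfolding total_qubits_eq or_circuit_def count_stage_def uncount_stage_def parity_stage_def or_stage_def
  using wf_kickback[OF layout_count_stage] wf_kickback[OF layout_parity_stage]
    wf_kickback[OF layout_or_stage] count_width_pos num_parities_pos
  by (auto simp: wf_circuit_def)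

text \<open>A schedule assigns a layer to every gate. It is valid from \<open>\<beta>\<close> (the layer last used on each
  qubit) if every gate is placed strictly above the layers of its qubits; the depth of the
  underlying circuit is then at most the largest layer used.\<close>

fun valid_schedule :: "(nat \<Rightarrow> nat) \<Rightarrow> (nat \<times> gate) list \<Rightarrow> bool" where
  "valid_schedule \<beta> [] = True"
| "valid_schedule \<beta> ((l, g) # L) \<longleftrightarrow>
     (\<forall>q\<in>gate_qubits g. \<beta> q < l) \<and> valid_schedule (\<lambda>q. if q \<in> gate_qubits g then l else \<beta> q) L"

fun layers_after :: "(nat \<Rightarrow> nat) \<Rightarrow> (nat \<times> gate) list \<Rightarrow> nat \<Rightarrow> nat" where
  "layers_after \<beta> [] = \<beta>"
| "layers_after \<beta> ((l, g) # L) = layers_after (\<lambda>q. if q \<in> gate_qubits g then l else \<beta> q) L"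

definition schedule_qubits :: "(nat \<times> gate) list \<Rightarrow> nat set" where
  "schedule_qubits L = (\<Union>x\<in>set L. gate_qubits (snd x))"

lemma valid_schedule_append:
  "valid_schedule \<beta> (A @ B) \<longleftrightarrow> valid_schedule \<beta> A \<and> valid_schedule (layers_after \<beta> A) B"
  by (induction \<beta> A rule: layers_after.induct) auto

lemma valid_schedule_mono: "valid_schedule \<beta>' L \<Longrightarrow> \<forall>q. \<beta> q \<le> \<beta>' q \<Longrightarrow> valid_schedule \<beta> L"
proof (induction \<beta>' L arbitrary: \<beta> rule: valid_schedule.induct)
  case (2 \<beta>' l g L)
  have "valid_schedule (\<lambda>q. if q \<in> gate_qubits g then l else \<beta> q) L"
    by (rule "2.IH") (use "2.prems" in auto)
  then show ?case using "2.prems" by (auto intro: le_less_trans)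
qed simp

lemma layers_after_le: "\<forall>q. \<beta> q \<le> a \<Longrightarrow> \<forall>x\<in>set A. fst x \<le> a \<Longrightarrow> layers_after \<beta> A q \<le> a"
  by (induction \<beta> A rule: layers_after.induct) auto

lemma valid_schedule_seq:
  "valid_schedule \<beta> A \<Longrightarrow> \<forall>q. \<beta> q \<le> a \<Longrightarrow> \<forall>x\<in>set A. fst x \<le> a \<Longrightarrow> valid_schedule (\<lambda>_. a) B \<Longrightarrow>
   valid_schedule \<beta> (A @ B)"
  unfolding valid_schedule_append using valid_schedule_mono layers_after_le by blast

lemma layers_after_notin: "q \<notin> schedule_qubits A \<Longrightarrow> layers_after \<beta> A q = \<beta> q"
  by (induction \<beta> A rule: layers_after.induct) (auto simp: schedule_qubits_def)

lemma valid_schedule_cong: "\<forall>q\<in>schedule_qubits L. \<beta> q = \<beta>' q \<Longrightarrow> valid_schedule \<beta> L = valid_schedule \<beta>' L"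
proof (induction \<beta> L arbitrary: \<beta>' rule: valid_schedule.induct)
  case (2 \<beta> l g L)
  have "valid_schedule (\<lambda>q. if q \<in> gate_qubits g then l else \<beta> q) L =
      valid_schedule (\<lambda>q. if q \<in> gate_qubits g then l else \<beta>' q) L"
    by (rule "2.IH") (use "2.prems" in \<open>auto simp: schedule_qubits_def\<close>)
  then show ?case using "2.prems" by (auto simp: schedule_qubits_def)
qed simp

lemma valid_schedule_parallel:
  "valid_schedule \<beta> A \<Longrightarrow> valid_schedule \<beta> B \<Longrightarrow> schedule_qubits A \<inter> schedule_qubits B = {} \<Longrightarrow>
   valid_schedule \<beta> (A @ B)"
  unfolding valid_schedule_append using valid_schedule_cong[of B "layers_after \<beta> A" \<beta>] layers_after_notin
  by blast

lemma schedule_qubits_concat: "schedule_qubits (concat (map F xs)) = (\<Union>i\<in>set xs. schedule_qubits (F i))"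
  by (auto simp: schedule_qubits_def)

lemma valid_schedule_concat:
  assumes "\<forall>i\<in>set xs. valid_schedule \<beta> (F i)" and "distinct xs"
    and "\<forall>i\<in>set xs. \<forall>j\<in>set xs. i \<noteq> j \<longrightarrow> schedule_qubits (F i) \<inter> schedule_qubits (F j) = {}"
  shows "valid_schedule \<beta> (concat (map F xs))"
  using assms
proof (induction xs)
  case (Cons x xs)
  have "schedule_qubits (F x) \<inter> schedule_qubits (concat (map F xs)) = {}"
    using Cons.prems unfolding schedule_qubits_concat by auto
  then show ?case using Cons by (simp add: valid_schedule_parallel)
qed simp

lemma gate_depths_le_layers:
  "valid_schedule \<beta> L \<Longrightarrow> \<forall>q. d q \<le> \<beta> q \<Longrightarrow> \<forall>y\<in>set L. fst y \<le> K \<Longrightarrow>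
   \<forall>x\<in>set (gate_depths d (map snd L)). x \<le> K"
proof (induction \<beta> L arbitrary: d rule: valid_schedule.induct)
  case (2 \<beta> l g L)
  have fin: "finite (gate_qubits g)" and ne: "gate_qubits g \<noteq> {}" by (cases g; simp)+
  have "Max (d ` gate_qubits g) < l"
    using "2.prems"(1,2) fin ne by (auto simp: Max_less_iff intro: le_less_trans)
  then have v: "Suc (Max (d ` gate_qubits g)) \<le> l" by simp
  have "\<forall>x\<in>set (gate_depths (\<lambda>q. if q \<in> gate_qubits g then Suc (Max (d ` gate_qubits g)) else d q) (map snd L)).
      x \<le> K"
    by (rule "2.IH") (use "2.prems" v in auto)
  then show ?case using v "2.prems"(3) by (simp add: Let_def)
qed simp

lemma circuit_depth_le_layers:
  "valid_schedule (\<lambda>_. 0) L \<Longrightarrow> \<forall>y\<in>set L. fst y \<le> K \<Longrightarrow> circuit_depth (map snd L) \<le> K"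
  unfolding circuit_depth_def using gate_depths_le_layers[of "\<lambda>_. 0" L "\<lambda>_. 0" K]
  by (auto simp: Max_le_iff)

definition at_layer :: "nat \<Rightarrow> gate list \<Rightarrow> (nat \<times> gate) list" where
  "at_layer l G = map (\<lambda>g. (l, g)) G"

definition cphase_schedule :: "nat \<Rightarrow> real \<Rightarrow> nat \<Rightarrow> nat \<Rightarrow> (nat \<times> gate) list" where
  "cphase_schedule a \<theta> x y = [(a + 1, OneQ x (phase_gate (\<theta>/2))), (a + 1, OneQ y (phase_gate (\<theta>/2))),
     (a + 2, CNOT x y), (a + 3, OneQ y (phase_gate (-\<theta>/2))), (a + 4, CNOT x y)]"

definition kickback_schedule ::
  "nat \<Rightarrow> (nat \<Rightarrow> nat) \<Rightarrow> (nat \<Rightarrow> nat) \<Rightarrow> (nat \<Rightarrow> nat \<Rightarrow> real) \<Rightarrow> nat \<Rightarrow> nat \<Rightarrow> nat \<Rightarrow> (nat \<times> gate) list"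
  where "kickback_schedule a tg sr \<theta> off p q =
     at_layer (a + 1) (one_qubit_layer (\<lambda>_. hadamard) tg p) @ at_layer (a + 2) (fanout_layer tg sr off p q)
     @ concat (map (\<lambda>(i, j). cphase_schedule (a + 2) (\<theta> i j) (target_copy off q i j) (source_copy off p q i j))
         (List.product [0..<p] [0..<q]))
     @ at_layer (a + 7) (fanout_layer tg sr off p q) @ at_layer (a + 8) (one_qubit_layer (\<lambda>_. hadamard) tg p)"

lemma map_snd_kickback_schedule: "map snd (kickback_schedule a tg sr \<theta> off p q) = kickback tg sr \<theta> off p q"
  by (simp add: kickback_schedule_def kickback_def at_layer_def cphase_layer_def cphase_schedule_def
      cphase_gates_def map_concat case_prod_unfold comp_def)

lemma kickback_schedule_layers: "\<forall>y\<in>set (kickback_schedule a tg sr \<theta> off p q). fst y \<le> a + 8"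
  by (auto simp: kickback_schedule_def at_layer_def cphase_schedule_def)

lemma valid_schedule_at_layer:
  assumes "distinct xs" "b < l"
    and "\<forall>i\<in>set xs. \<forall>j\<in>set xs. i \<noteq> j \<longrightarrow> gate_qubits (f i) \<inter> gate_qubits (f j) = {}"
  shows "valid_schedule (\<lambda>_. b) (at_layer l (map f xs))"
proof -
  have "valid_schedule (\<lambda>_. b) (concat (map (\<lambda>i. [(l, f i)]) xs))"
    by (rule valid_schedule_concat) (use assms in \<open>auto simp: schedule_qubits_def\<close>)
  then show ?thesis by (simp add: at_layer_def comp_def)
qed

lemma mult_add_inj:
  fixes i j i' j' q :: nat
  assumes "i * q + j = i' * q + j'" "j < q" "j' < q"
  shows "i = i' \<and> j = j'"
proof -
  have "(i * q + j) div q = i" "(i * q + j) mod q = j" "(i' * q + j') div q = i'" "(i' * q + j') mod q = j'"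
    using assms(2,3) by simp_all
  then show ?thesis using assms(1) by metis
qed

lemma valid_cphase_schedules:
  assumes "a \<le> b"
  shows "valid_schedule (\<lambda>_. a) (concat (map (\<lambda>(i, j).
    cphase_schedule b (\<theta> i j) (target_copy off q i j) (source_copy off p q i j)) (List.product [0..<p] [0..<q])))"
proof (rule valid_schedule_concat)
  let ?qubits = "\<lambda>(i, j). {target_copy off q i j, source_copy off p q i j}"
  have sched: "schedule_qubits (case x of (i, j) \<Rightarrow> cphase_schedule b (\<theta> i j) (target_copy off q i j)
      (source_copy off p q i j)) = ?qubits x" for x
    by (cases x) (auto simp: schedule_qubits_def cphase_schedule_def)
  have ranges: "target_copy off q i j < off + p * q" "off + p * q \<le> source_copy off p q i j"
    if "i < p" "j < q" for i j
    using target_copy_less[OF that] by (simp_all add: source_copy_def)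
  show "\<forall>x\<in>set (List.product [0..<p] [0..<q]). valid_schedule (\<lambda>_. a) (case x of (i, j) \<Rightarrow>
      cphase_schedule b (\<theta> i j) (target_copy off q i j) (source_copy off p q i j))"
    using ranges assms by (fastforce simp: cphase_schedule_def)
  show "\<forall>x\<in>set (List.product [0..<p] [0..<q]). \<forall>y\<in>set (List.product [0..<p] [0..<q]). x \<noteq> y \<longrightarrow>
      schedule_qubits (case x of (i, j) \<Rightarrow> cphase_schedule b (\<theta> i j) (target_copy off q i j) (source_copy off p q i j)) \<inter>
      schedule_qubits (case y of (i, j) \<Rightarrow> cphase_schedule b (\<theta> i j) (target_copy off q i j) (source_copy off p q i j)) = {}"
    unfolding sched using ranges
    by (fastforce simp: target_copy_def source_copy_def dest: mult_add_inj)
qed (simp add: distinct_product)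

lemma fanout_control_inj:
  assumes ok: "kickback_layout tg sr off p q N" and l: "l < p + q" "l' < p + q"
    and eq: "fanout_control tg sr p l = fanout_control tg sr p l'"
  shows "l = l'"
proof -
  have tg: "inj_on tg {..<p}" and sr: "inj_on sr {..<q}" and disj: "\<forall>i<p. \<forall>j<q. tg i \<noteq> sr j"
    using ok by (auto simp: kickback_layout_def)
  consider "l < p" "l' < p" | "l < p" "\<not> l' < p" | "\<not> l < p" "l' < p" | "\<not> l < p" "\<not> l' < p"
    by blast
  then show ?thesis
  proof cases
    case 1
    then show ?thesis using eq tg by (simp add: fanout_control_def inj_on_def)
  next
    case 2
    then show ?thesis using eq disj l(2) by (simp add: fanout_control_def)
  next
    case 3
    moreover have "l - p < q" using 3 l(1) by simp
    ultimately show ?thesis using eq disj by (force simp: fanout_control_def)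
  next
    case 4
    then have "l - p = l' - p" using eq sr l by (simp add: fanout_control_def inj_on_def)
    then show ?thesis using 4 by simp
  qed
qed

lemma fanout_layer_disjoint:
  assumes ok: "kickback_layout tg sr off p q N" and l: "l < p + q" "l' < p + q" "l \<noteq> l'"
  shows "gate_qubits (Fanout (fanout_control tg sr p l) (fanout_targets off p q l)) \<inter>
    gate_qubits (Fanout (fanout_control tg sr p l') (fanout_targets off p q l')) = {}"
proof -
  have "fanout_control tg sr p l \<noteq> fanout_control tg sr p l'"
    using fanout_control_inj[OF ok l(1,2)] l(3) by blast
  moreover have "fanout_control tg sr p l < off" "fanout_control tg sr p l' < off"
    using fanout_control_less[OF ok] l by auto
  moreover have "\<forall>k\<in>set (fanout_targets off p q l). off \<le> k \<and> copy_owner off p q k = l"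
    "\<forall>k\<in>set (fanout_targets off p q l'). off \<le> k \<and> copy_owner off p q k = l'"
    using mem_fanout_targets l by blast+
  ultimately show ?thesis using l(3) by fastforce
qed

lemma valid_kickback_schedule:
  assumes ok: "kickback_layout tg sr off p q N"
  shows "valid_schedule (\<lambda>_. a) (kickback_schedule a tg sr \<theta> off p q)"
proof -
  have H: "b < l \<Longrightarrow> valid_schedule (\<lambda>_. b) (at_layer l (one_qubit_layer (\<lambda>_. hadamard) tg p))" for b l
    using ok unfolding one_qubit_layer_def
    by (intro valid_schedule_at_layer) (auto simp: inj_on_def kickback_layout_def)
  have F: "b < l \<Longrightarrow> valid_schedule (\<lambda>_. b) (at_layer l (fanout_layer tg sr off p q))" for b l
    unfolding fanout_layer_def by (intro valid_schedule_at_layer) (use fanout_layer_disjoint[OF ok] in auto)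
  have L: "\<forall>x\<in>set (at_layer l G). fst x \<le> l" for l G by (simp add: at_layer_def)
  let ?C = "concat (map (\<lambda>(i, j). cphase_schedule (a + 2) (\<theta> i j) (target_copy off q i j)
    (source_copy off p q i j)) (List.product [0..<p] [0..<q]))"
  have C: "valid_schedule (\<lambda>_. a + 2) ?C" by (rule valid_cphase_schedules) simp
  have "\<forall>x\<in>set ?C. fst x \<le> a + 6" by (auto simp: cphase_schedule_def)
  have s4: "valid_schedule (\<lambda>_. a + 6) (at_layer (a + 7) (fanout_layer tg sr off p q) @
      at_layer (a + 8) (one_qubit_layer (\<lambda>_. hadamard) tg p))"
    by (rule valid_schedule_seq[where a="a + 7", OF F _ _ H]) (simp_all add: L)
  have s3: "valid_schedule (\<lambda>_. a + 2) (?C @ at_layer (a + 7) (fanout_layer tg sr off p q) @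
      at_layer (a + 8) (one_qubit_layer (\<lambda>_. hadamard) tg p))"
    by (rule valid_schedule_seq[where a="a + 6", OF C _ _ s4]) (simp_all add: \<open>\<forall>x\<in>set ?C. fst x \<le> a + 6\<close>)
  have s2: "valid_schedule (\<lambda>_. a + 1) (at_layer (a + 2) (fanout_layer tg sr off p q) @ ?C @
      at_layer (a + 7) (fanout_layer tg sr off p q) @ at_layer (a + 8) (one_qubit_layer (\<lambda>_. hadamard) tg p))"
    by (rule valid_schedule_seq[where a="a + 2", OF F _ _ s3]) (simp_all add: L)
  show ?thesis unfolding kickback_schedule_def
    by (rule valid_schedule_seq[where a="a + 1", OF H _ _ s2]) (simp_all add: L)
qed

lemma valid_kickback_schedule_append:
  assumes "kickback_layout tg sr off p q N" and "valid_schedule (\<lambda>_. b) B" and "b = a + 8"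
  shows "valid_schedule (\<lambda>_. a) (kickback_schedule a tg sr \<theta> off p q @ B)"
  by (rule valid_schedule_seq[where a="a + 8", OF valid_kickback_schedule[OF assms(1)] _ kickback_schedule_layers])
    (use assms in auto)

definition or_schedule :: "nat \<Rightarrow> (nat \<times> gate) list" where
  "or_schedule n =
     kickback_schedule 0 (count_qubit n) id count_angle (count_scratch n) (count_width n) n
     @ kickback_schedule 8 (parity_qubit n) (count_qubit n) parity_angle (parity_scratch n) (num_parities n) (count_width n)
     @ kickback_schedule 16 (\<lambda>_. n) (parity_qubit n) (or_angle n) (or_scratch n) 1 (num_parities n)
     @ kickback_schedule 24 (parity_qubit n) (count_qubit n) parity_angle (parity_scratch n) (num_parities n) (count_width n)
     @ kickback_schedule 32 (count_qubit n) id uncount_angle (count_scratch n) (count_width n) n"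

lemma depth_or_circuit: "circuit_depth (or_circuit n) \<le> 40"
proof -
  have "map snd (or_schedule n) = or_circuit n"
    by (simp add: or_schedule_def or_circuit_def map_snd_kickback_schedule count_stage_def
        uncount_stage_def parity_stage_def or_stage_def)
  moreover have "valid_schedule (\<lambda>_. 0) (or_schedule n)"
    unfolding or_schedule_def
    by (rule valid_kickback_schedule_append[OF layout_count_stage
        valid_kickback_schedule_append[OF layout_parity_stage
        valid_kickback_schedule_append[OF layout_or_stage
        valid_kickback_schedule_append[OF layout_parity_stage valid_kickback_schedule[OF layout_count_stage]]]]])
      simp_all
  moreover have "\<forall>y\<in>set (or_schedule n). fst y \<le> 40"
    using kickback_schedule_layers[of 0] kickback_schedule_layers[of 8] kickback_schedule_layers[of 16]
      kickback_schedule_layers[of 24] kickback_schedule_layers[of 32]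
    by (fastforce simp: or_schedule_def)
  ultimately show ?thesis using circuit_depth_le_layers by metis
qed

fun gate_weight :: "gate \<Rightarrow> nat" where
  "gate_weight (OneQ q U) = 1"
| "gate_weight (CNOT a b) = 2"
| "gate_weight (Fanout c ts) = Suc (length ts)"

lemma circuit_size_le_weight: "circuit_size C \<le> (\<Sum>g\<leftarrow>C. gate_weight g)"
proof -
  have "card (gate_qubits g) \<le> gate_weight g" for g
    by (cases g) (auto simp: card_insert_if card_length le_SucI)
  then show ?thesis unfolding circuit_size_def by (induction C) (auto intro: add_mono)
qed

lemma weight_kickback:
  assumes "1 \<le> p" "1 \<le> q"
  shows "(\<Sum>g\<leftarrow>kickback tg sr \<theta> off p q. gate_weight g) \<le> 17 * p * q"
proof -
  have fanouts: "(\<Sum>g\<leftarrow>fanout_layer tg sr off p q. gate_weight g) = p * Suc q + q * Suc p"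
  proof -
    have "(\<Sum>g\<leftarrow>fanout_layer tg sr off p q. gate_weight g) = (\<Sum>l<p + q. Suc (length (fanout_targets off p q l)))"
      by (simp add: fanout_layer_def comp_def interv_sum_list_conv_sum_set_nat atLeast0LessThan)
    also have "\<dots> = (\<Sum>l<p. Suc q) + (\<Sum>l<q. Suc p)"
    proof -
      have "(\<Sum>l<p + k. f l) = (\<Sum>l<p. f l) + (\<Sum>l<k. f (p + l))" for k and f :: "nat \<Rightarrow> nat"
        by (induction k) auto
      then show ?thesis by (simp add: fanout_targets_def)
    qed
    finally show ?thesis by simp
  qed
  have cphases: "(\<Sum>g\<leftarrow>cphase_layer \<theta> off p q. gate_weight g) = 7 * p * q"
  proof -
    have "(\<Sum>g\<leftarrow>concat (map (\<lambda>x. cphase_gates (\<theta>' x) (a x) (b x)) xs). gate_weight g) = 7 * length xs"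
      for \<theta>' a b and xs :: "(nat \<times> nat) list"
      by (induction xs) (simp_all add: cphase_gates_def)
    then show ?thesis by (simp add: cphase_layer_def case_prod_unfold length_product)
  qed
  have "(\<Sum>g\<leftarrow>kickback tg sr \<theta> off p q. gate_weight g) = 2 * p + 2 * (p * Suc q + q * Suc p) + 7 * p * q"
    by (simp add: kickback_def one_qubit_layer_def fanouts cphases comp_def sum_list_triv)
  also have "\<dots> = 4 * p + 2 * q + 11 * (p * q)" by (simp add: algebra_simps)
  also have "\<dots> \<le> 17 * p * q"
  proof -
    have "p \<le> p * q" "q \<le> p * q" using assms by simp_all
    then show ?thesis by linarith
  qed
  finally show ?thesis .
qed

lemma size_or_circuit: "1 \<le> n \<Longrightarrow> circuit_size (or_circuit n) \<le> 136 * n * count_width n"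
proof -
  assume n: "1 \<le> n"
  let ?m = "count_width n" and ?P = "num_parities n"
  have m: "1 \<le> ?m" and P: "1 \<le> ?P" using count_width_pos[OF n] num_parities_pos[OF n] .
  have "(2::nat) ^ ?m = 2 * 2 ^ (?m - 1)" using m by (simp flip: power_Suc)
  then have P_le: "?P \<le> 2 * n" using pow2_count_width_le[OF n] pow2_count_width[of n] by linarith
  have "circuit_size (or_circuit n) \<le> (\<Sum>g\<leftarrow>or_circuit n. gate_weight g)"
    by (rule circuit_size_le_weight)
  also have "\<dots> \<le> 17 * ?m * n + 17 * ?P * ?m + 17 * 1 * ?P + 17 * ?P * ?m + 17 * ?m * n"
    using weight_kickback[OF m n, of "count_qubit n" id count_angle "count_scratch n"]
      weight_kickback[OF P m, of "parity_qubit n" "count_qubit n" parity_angle "parity_scratch n"]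
      weight_kickback[OF order_refl P, of "\<lambda>_. n" "parity_qubit n" "or_angle n" "or_scratch n"]
      weight_kickback[OF m n, of "count_qubit n" id uncount_angle "count_scratch n"]
    unfolding or_circuit_def count_stage_def uncount_stage_def parity_stage_def or_stage_def
    by (simp only: sum_list_append map_append)
  also have "\<dots> \<le> 17 * ?m * n + 17 * (2 * n) * ?m + 17 * (2 * n) * ?m + 17 * (2 * n) * ?m + 17 * ?m * n"
    using P_le m by (intro add_mono mult_right_mono mult_left_mono order_refl) (auto intro: order.trans)
  also have "\<dots> = 136 * n * ?m" by (simp add: algebra_simps)
  finally show ?thesis .
qed

lemma count_width_le_log: "2 \<le> n \<Longrightarrow> real (count_width n) \<le> 2 * log 2 (real n)"
proof -
  assume n: "2 \<le> n"
  then have "real (2 ^ (count_width n - 1)) \<le> real n" using pow2_count_width_le[of n] by linarith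
  then have "real (count_width n - 1) \<le> log 2 (real n)" by (intro le_log_of_power) auto
  moreover have "1 \<le> log 2 (real n)" using n by (simp add: le_log_iff)
  ultimately show ?thesis using count_width_pos[of n] n by linarith
qed

lemma size_or_circuit_bigo: "(\<lambda>n. real (circuit_size (or_circuit n))) \<in> O(\<lambda>n. real n * log 2 (real n))"
proof (rule bigoI[where c = 272])
  have "norm (real (circuit_size (or_circuit n))) \<le> 272 * norm (real n * log 2 (real n))" if "2 \<le> n" for n
  proof -
    have "real (circuit_size (or_circuit n)) \<le> 136 * real n * real (count_width n)"
    proof -
      have "circuit_size (or_circuit n) \<le> 136 * n * count_width n" using size_or_circuit that by simp
      then show ?thesis by (metis of_nat_le_iff of_nat_mult of_nat_numeral)
    qed
    also have "\<dots> \<le> 136 * real n * (2 * log 2 (real n))"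
      using count_width_le_log[OF that] by (intro mult_left_mono) auto
    finally show ?thesis using that by simp
  qed
  then show "eventually (\<lambda>n. norm (real (circuit_size (or_circuit n))) \<le> 272 * norm (real n * log 2 (real n))) at_top"
    unfolding eventually_at_top_linorder by blast
qed

theorem theorem1:
  shows "\<exists>(C :: nat \<Rightarrow> gate list) (a :: nat \<Rightarrow> nat) (d :: nat).
           (\<forall>n\<ge>1. wf_circuit (Suc n + a n) (C n) \<and> implements_OR n (a n) (C n)
                  \<and> circuit_depth (C n) \<le> d)
         \<and> (\<lambda>n. real (circuit_size (C n))) \<in> O(\<lambda>n. real n * log 2 (real n))"
  using wf_or_circuit or_circuit_implements_OR depth_or_circuit size_or_circuit_bigo by blast

end
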